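(* Let $n\ge1$ be an integer and, for $f\in C(\triangle_H)$, define $$\mathcal L_nf(\mathbf t)=\sum_{\mathbf j\in\Lambda_n^\circ}f(\tfrac{\mathbf j}{4n})\,\ell^\circ_{\mathbf j,n}(\mathbf t),\qquad \ell^\circ_{\mathbf j,n}(\mathbf t)=\frac{144}{n^3}\sum_{\mathbf k\in\Lambda_n^\circ}\mathsf{TS}_{\mathbf k}(\mathbf t)\overline{\mathsf{TS}_{\mathbf k}(\tfrac{\mathbf j}{4n})}.$$ Then $\mathcal L_nf$ is the unique function in $\mathcal{TS}_n$ satisfying $\mathcal L_nf(\tfrac{\mathbf j}{4n})=f(\tfrac{\mathbf j}{4n})$ for all $\mathbf j\in\Lambda_n^\circ$. Furthermore, $\ell^\circ_{\mathbf j,n}$ is real and $$\ell^\circ_{\mathbf j,n}(\mathbf t)=\frac6{n^3}\,\mathcal P^-_{\mathbf t}\Big[\Theta_n(\mathbf t-\tfrac{\mathbf j}{4n})-\Theta_{n-1}(\mathbf t-\tfrac{\mathbf j}{4n})\Big],$$ where $\mathcal P^-_{\mathbf t}$ denotes $\mathcal P^-$ acting in the variable $\mathbf t$.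
   Context: Let $\mathbb R^4_H=\{\mathbf t\in\mathbb R^4: t_1+t_2+t_3+t_4=0\}$, $\mathbb Z^4_H=\mathbb Z^4\cap\mathbb R^4_H$, $\mathbb H=\{\mathbf k\in\mathbb Z^4_H: k_1\equiv k_2\equiv k_3\equiv k_4\pmod4\}$, $\phi_{\mathbf k}(\mathbf t)=e^{\frac{\pi i}{2}\mathbf k\cdot\mathbf t}$. Let $\mathcal G=S_4$ act on $\mathbf t$ by permuting coordinates, $\mathbf t\mapsto\mathbf t\sigma$, and let $\operatorname{sgn}\sigma$ be the sign of $\sigma$. Define $\mathcal P^-f(\mathbf t)=\frac1{24}\sum_{\sigma\in\mathcal G}\operatorname{sgn}(\sigma)f(\mathbf t\sigma)$ and $\mathsf{TS}_{\mathbf k}=-\mathcal P^-\phi_{\mathbf k}$. Let $\triangle_H=\{\mathbf t\in\mathbb R^4_H: t_1-t_2,\,t_2-t_3,\,t_3-t_4,\,t_1-t_4\in[0,1]\}$, $\Lambda_n^\circ=\{\mathbf k\in\mathbb H: k_4<k_3<k_2<k_1<k_4+4n\}$ and $\mathcal{TS}_n=\operatorname{span}\{\mathsf{TS}_{\mathbf k}:\mathbf k\in\Lambda_n^\circ\}$. Let $\Theta_m(\mathbf t)=\prod_{j=1}^4\frac{\sin\pi m t_j}{\sin\pi t_j}$ (continuous extension at integer $t_j$). *)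

theory Defs
  imports "HOL-Analysis.Analysis" "HOL-Combinatorics.Permutations"
begin

definition R4H :: "(real^4) set" where
  "R4H = {t. (\<Sum>i\<in>UNIV. t$i) = 0}"

definition Hlat :: "(int^4) set" where
  "Hlat = {k. (\<Sum>i\<in>UNIV. k$i) = 0 \<and>
     k$1 mod 4 = k$2 mod 4 \<and> k$2 mod 4 = k$3 mod 4 \<and> k$3 mod 4 = k$4 mod 4}"

definition phi :: "int^4 \<Rightarrow> real^4 \<Rightarrow> complex" where
  "phi k t = exp (complex_of_real (pi / 2) * \<i> * complex_of_real (\<Sum>i\<in>UNIV. real_of_int (k$i) * t$i))"

definition perm_vec :: "real^4 \<Rightarrow> (4 \<Rightarrow> 4) \<Rightarrow> real^4" where
  "perm_vec t \<sigma> = (\<chi> i. t $ \<sigma> i)"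

definition Pminus :: "(real^4 \<Rightarrow> 'a::field_char_0) \<Rightarrow> real^4 \<Rightarrow> 'a" where
  "Pminus f t = (\<Sum>\<sigma>\<in>{\<sigma>. \<sigma> permutes (UNIV::4 set)}. of_int (sign \<sigma>) * f (perm_vec t \<sigma>)) / 24"

definition TS :: "int^4 \<Rightarrow> real^4 \<Rightarrow> complex" where
  "TS k t = - Pminus (phi k) t"

definition triangleH :: "(real^4) set" where
  "triangleH = {t \<in> R4H. t$1 - t$2 \<in> {0..1} \<and> t$2 - t$3 \<in> {0..1} \<and>
                          t$3 - t$4 \<in> {0..1} \<and> t$1 - t$4 \<in> {0..1}}"

definition Lambda :: "nat \<Rightarrow> (int^4) set" where
  "Lambda n = {k \<in> Hlat. k$4 < k$3 \<and> k$3 < k$2 \<and> k$2 < k$1 \<and> k$1 < k$4 + 4 * int n}"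

definition TSspace :: "nat \<Rightarrow> (real^4 \<Rightarrow> complex) set" where
  "TSspace n = {g. \<exists>c :: int^4 \<Rightarrow> complex. g = (\<lambda>t. \<Sum>k\<in>Lambda n. c k * TS k t)}"

text \<open>sin(pi m x)/sin(pi x), continuously extended at integers x.\<close>
definition dir1 :: "nat \<Rightarrow> real \<Rightarrow> real" where
  "dir1 m x = (if x \<in> \<int> then real m * cos (pi * real m * x) / cos (pi * x)
               else sin (pi * real m * x) / sin (pi * x))"

definition Theta :: "nat \<Rightarrow> real^4 \<Rightarrow> real" where
  "Theta m t = (\<Prod>i\<in>UNIV. dir1 m (t$i))"

definition node :: "nat \<Rightarrow> int^4 \<Rightarrow> real^4" where
  "node n j = (\<chi> i. real_of_int (j$i) / (4 * real n))"

definition ell :: "nat \<Rightarrow> int^4 \<Rightarrow> real^4 \<Rightarrow> complex" where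
  "ell n j t = complex_of_real (144 / real n ^ 3) *
     (\<Sum>k\<in>Lambda n. TS k t * cnj (TS k (node n j)))"

definition Lint :: "nat \<Rightarrow> (real^4 \<Rightarrow> complex) \<Rightarrow> real^4 \<Rightarrow> complex" where
  "Lint n f t = (\<Sum>j\<in>Lambda n. f (node n j) * ell n j t)"

end

theory Submission
  imports Defs
begin

text \<open>The values \<open>TS\<^sub>k(j/4n)\<close>, \<open>j, k \<in> \<Lambda>\<^sub>n\<close>, form a symmetric matrix whose rows are
  orthogonal with common norm \<open>n\<^sup>3/144\<close>; this alone yields the interpolation property, the
  uniqueness and the formula for \<open>\<L>\<^sub>n\<close>. For the orthogonality, antisymmetry turns the sum over
  \<open>\<Lambda>\<^sub>n\<close> into \<open>1/24\<close> of a sum over the cell of \<open>\<bbbH>\<close> where all coordinate differences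
  are below \<open>4n\<close>; periodicity modulo \<open>4n\<close> moves it to a residue system of \<open>\<bbbH>\<close>, on which the
  characters \<open>\<phi>\<^sub>m\<close> sum to \<open>4n\<^sup>3\<close> or \<open>0\<close>. The same symmetrisation writes the kernel
  \<open>\<Sum>\<^sub>k TS\<^sub>k(t) conj TS\<^sub>k(s)\<close> as \<open>\<P>\<^sup>-\<close> of \<open>\<Sum>\<^sub>k \<phi>\<^sub>k(t - s)\<close> over the cell, and this
  sum is \<open>\<Theta>\<^sub>n - \<Theta>\<^bsub>n-1\<^esub>\<close>: the cell is the image of the faces \<open>{a \<in> [0, n)\<^sup>4. \<exists>i. a\<^sub>i = 0}\<close>
  under \<open>a \<mapsto> (\<Sum>a\<^sub>i)\<one> - 4a\<close>, and \<open>\<Theta>\<^sub>m\<close> is the sum of the corresponding exponentials over the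
  whole cube \<open>[0, m)\<^sup>4\<close>.\<close>

section \<open>Permuting coordinates\<close>

abbreviation perms4 :: "(4 \<Rightarrow> 4) set" where
  "perms4 \<equiv> {\<sigma>. \<sigma> permutes (UNIV :: 4 set)}"

lemma card_perms4: "card perms4 = 24"
proof -
  have "card perms4 = fact (card (UNIV :: 4 set))" by (rule card_permutations) auto
  then show ?thesis by (simp add: fact_numeral)
qed

lemma of_int_sign_squared: "of_int (sign \<sigma>) * of_int (sign \<sigma>) = (1 :: 'a :: comm_ring_1)"
  by (simp flip: of_int_mult)

lemma sum_permutes_UNIV:
  "\<sigma> permutes (UNIV :: 'n :: finite set) \<Longrightarrow> (\<Sum>i\<in>UNIV. f (\<sigma> i)) = (\<Sum>i\<in>UNIV. f i)"
  using sum.permute[of \<sigma> UNIV f] by (simp add: o_def)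

lemma sum_signed_permutations_compose_left:
  fixes F :: "('n :: finite \<Rightarrow> 'n) \<Rightarrow> 'a :: comm_ring_1"
  assumes "\<tau> permutes UNIV"
  shows "(\<Sum>p\<in>{p. p permutes UNIV}. of_int (sign p) * F (\<tau> \<circ> p))
       = of_int (sign \<tau>) * (\<Sum>p\<in>{p. p permutes UNIV}. of_int (sign p) * F p)"
proof -
  have perm: "permutation p" if "p permutes (UNIV :: 'n set)" for p
    using that by (simp add: permutes_imp_permutation)
  have "(\<Sum>p\<in>{p. p permutes UNIV}. of_int (sign p) * F p)
      = (\<Sum>p\<in>{p. p permutes UNIV}. of_int (sign (\<tau> \<circ> p)) * F (\<tau> \<circ> p))"
    by (rule setum_permutations_compose_left[OF assms])
  also have "\<dots> = of_int (sign \<tau>) * (\<Sum>p\<in>{p. p permutes UNIV}. of_int (sign p) * F (\<tau> \<circ> p))"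
    by (simp add: sum_distrib_left sign_compose perm assms mult_ac)
  finally show ?thesis
    by (simp add: mult.assoc[symmetric] of_int_sign_squared)
qed

definition permute_vec :: "'a ^ 'n \<Rightarrow> ('n \<Rightarrow> 'n) \<Rightarrow> 'a ^ 'n" where
  "permute_vec k \<sigma> = (\<chi> i. k $ \<sigma> i)"

lemma permute_vec_nth [simp]: "permute_vec k \<sigma> $ i = k $ \<sigma> i"
  by (simp add: permute_vec_def)

lemma perm_vec_nth [simp]: "perm_vec t \<sigma> $ i = t $ \<sigma> i"
  by (simp add: perm_vec_def)

lemma permute_vec_comp: "permute_vec (permute_vec k \<sigma>) \<tau> = permute_vec k (\<sigma> \<circ> \<tau>)"
  by (simp add: vec_eq_iff)

lemma perm_vec_comp: "perm_vec (perm_vec t \<sigma>) \<tau> = perm_vec t (\<sigma> \<circ> \<tau>)"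
  by (simp add: vec_eq_iff)

lemma permute_vec_id [simp]: "permute_vec k id = k"
  by (simp add: vec_eq_iff)

lemma permute_vec_inv_cancel:
  assumes "\<sigma> permutes UNIV"
  shows "permute_vec (permute_vec k \<sigma>) (inv \<sigma>) = k" "permute_vec (permute_vec k (inv \<sigma>)) \<sigma> = k"
  by (simp_all add: permute_vec_comp permutes_inv_o[OF assms])

lemma perm_vec_transpose: "t $ a = t $ b \<Longrightarrow> perm_vec t (Transposition.transpose a b) = t"
  by (simp add: vec_eq_iff Transposition.transpose_def)

lemma permute_vec_transpose: "k $ a = k $ b \<Longrightarrow> permute_vec k (Transposition.transpose a b) = k"
  by (simp add: vec_eq_iff Transposition.transpose_def)

lemma node_permute_vec: "node n (permute_vec j \<sigma>) = perm_vec (node n j) \<sigma>"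
  by (simp add: vec_eq_iff node_def)

lemma Hlat_iff: "k \<in> Hlat \<longleftrightarrow> (\<Sum>i\<in>UNIV. k$i) = 0 \<and> (\<forall>a b. k$a mod 4 = k$b mod 4)"
  unfolding Hlat_def forall_4 by auto

lemma Hlat_permute_vec: "k \<in> Hlat \<Longrightarrow> \<sigma> permutes UNIV \<Longrightarrow> permute_vec k \<sigma> \<in> Hlat"
  using sum_permutes_UNIV[of \<sigma> "($) k"] by (simp add: Hlat_iff)

lemma Hlat_diff: "k \<in> Hlat \<Longrightarrow> k' \<in> Hlat \<Longrightarrow> k - k' \<in> Hlat"
  unfolding Hlat_iff by (auto simp: sum_subtractf intro: mod_diff_cong)

lemma R4H_perm_vec: "t \<in> R4H \<Longrightarrow> \<sigma> permutes UNIV \<Longrightarrow> perm_vec t \<sigma> \<in> R4H"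
  using sum_permutes_UNIV[of \<sigma> "($) t"] by (simp add: R4H_def)

lemma R4H_diff: "t \<in> R4H \<Longrightarrow> s \<in> R4H \<Longrightarrow> t - s \<in> R4H"
  by (simp add: R4H_def sum_subtractf)

lemma node_in_R4H: "j \<in> Hlat \<Longrightarrow> node n j \<in> R4H"
  unfolding Hlat_iff R4H_def node_def
  by (simp add: sum_divide_distrib[symmetric] flip: of_int_sum)

lemma phi_perm_vec:
  assumes "\<sigma> permutes UNIV"
  shows "phi k (perm_vec t \<sigma>) = phi (permute_vec k (inv \<sigma>)) t"
proof -
  have "(\<Sum>i\<in>UNIV. real_of_int (k$i) * t$(\<sigma> i))
      = (\<Sum>i\<in>UNIV. real_of_int (k$(inv \<sigma> (\<sigma> i))) * t$(\<sigma> i))"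
    using permutes_inverses(2)[OF assms] by simp
  also have "\<dots> = (\<Sum>i\<in>UNIV. real_of_int (k$(inv \<sigma> i)) * t$i)"
    by (rule sum_permutes_UNIV[OF assms, of "\<lambda>i. real_of_int (k$(inv \<sigma> i)) * t$i"])
  finally show ?thesis unfolding phi_def by simp
qed

lemma phi_mult_cnj: "phi a t * cnj (phi b t) = phi (a - b) t"
  unfolding phi_def
  by (simp add: exp_cnj exp_add[symmetric] algebra_simps sum_subtractf)

lemma phi_mult_cnj_shift: "phi a t * cnj (phi a s) = phi a (t - s)"
  unfolding phi_def
  by (simp add: exp_cnj exp_add[symmetric] right_diff_distrib left_diff_distrib sum_subtractf)

lemma phi_node_commute: "phi k (node n j) = phi j (node n k)"
  unfolding phi_def node_def by (simp add: mult.commute)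

lemma TS_eq_sum_permute_vec:
  "TS k t = - (\<Sum>\<sigma>\<in>perms4. of_int (sign \<sigma>) * phi (permute_vec k \<sigma>) t) / 24"
proof -
  have "(\<Sum>\<sigma>\<in>perms4. of_int (sign \<sigma>) * phi k (perm_vec t \<sigma>))
      = (\<Sum>\<sigma>\<in>perms4. of_int (sign \<sigma>) * phi (permute_vec k (inv \<sigma>)) t)"
    by (rule sum.cong) (auto simp: phi_perm_vec)
  also have "\<dots> = (\<Sum>\<sigma>\<in>perms4. of_int (sign (inv \<sigma>)) * phi (permute_vec k (inv (inv \<sigma>))) t)"
    by (rule sum_permutations_inverse)
  also have "\<dots> = (\<Sum>\<sigma>\<in>perms4. of_int (sign \<sigma>) * phi (permute_vec k \<sigma>) t)"
    by (rule sum.cong) (auto simp: sign_inverse permutes_imp_permutation permutes_inv_inv)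
  finally show ?thesis unfolding TS_def Pminus_def by simp
qed

lemma TS_perm_vec: "\<tau> permutes UNIV \<Longrightarrow> TS k (perm_vec t \<tau>) = of_int (sign \<tau>) * TS k t"
  unfolding TS_def Pminus_def perm_vec_comp
  using sum_signed_permutations_compose_left[of \<tau> "\<lambda>p. phi k (perm_vec t p)"] by simp

lemma TS_permute_vec: "\<tau> permutes UNIV \<Longrightarrow> TS (permute_vec k \<tau>) t = of_int (sign \<tau>) * TS k t"
  unfolding TS_eq_sum_permute_vec permute_vec_comp
  using sum_signed_permutations_compose_left[of \<tau> "\<lambda>p. phi (permute_vec k p) t"] by simp

lemma TS_node_commute: "TS k (node n j) = TS j (node n k)"
proof -
  have "(\<Sum>\<sigma>\<in>perms4. of_int (sign \<sigma>) * phi (permute_vec k \<sigma>) (node n j))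
      = (\<Sum>\<sigma>\<in>perms4. of_int (sign \<sigma>) * phi j (perm_vec (node n k) \<sigma>))"
    by (rule sum.cong) (auto simp: phi_node_commute[of "permute_vec k _"] node_permute_vec)
  then show ?thesis
    unfolding TS_eq_sum_permute_vec[of k] by (simp add: TS_def Pminus_def)
qed

lemma transpose_permutes_UNIV: "Transposition.transpose a b permutes UNIV"
  by (simp add: permutes_swap_id)

lemma TS_eq_0_if_coords_eq: "a \<noteq> b \<Longrightarrow> t $ a = t $ b \<Longrightarrow> TS k t = 0"
  using TS_perm_vec[OF transpose_permutes_UNIV[of a b], of k t]
  by (simp add: perm_vec_transpose sign_swap_id)

lemma TS_eq_0_if_freqs_eq: "a \<noteq> b \<Longrightarrow> k $ a = k $ b \<Longrightarrow> TS k t = 0"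
  using TS_permute_vec[OF transpose_permutes_UNIV[of a b], of k t]
  by (simp add: permute_vec_transpose sign_swap_id)

section \<open>The cell of the lattice and its descending points\<close>

definition Hcell :: "nat \<Rightarrow> (int^4) set" where
  "Hcell n = {k \<in> Hlat. \<forall>a b. k$a - k$b < 4 * int n}"

definition descending :: "int^4 \<Rightarrow> bool" where
  "descending k \<longleftrightarrow> k$4 < k$3 \<and> k$3 < k$2 \<and> k$2 < k$1"

lemma Lambda_subset_Hcell: "Lambda n \<subseteq> Hcell n"
  unfolding Lambda_def Hcell_def forall_4 by auto

lemma Hcell_subset_Hlat: "Hcell n \<subseteq> Hlat"
  unfolding Hcell_def by auto

lemma Hcell_permute_vec: "k \<in> Hcell n \<Longrightarrow> \<sigma> permutes UNIV \<Longrightarrow> permute_vec k \<sigma> \<in> Hcell n"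
  unfolding Hcell_def by (auto simp: Hlat_permute_vec)

lemma Lambda_iff_descending:
  assumes "k \<in> Hcell n"
  shows "k \<in> Lambda n \<longleftrightarrow> descending k"
proof -
  have "k \<in> Hlat" "k$1 - k$4 < 4 * int n" using assms unfolding Hcell_def by auto
  then show ?thesis unfolding Lambda_def descending_def by auto
qed

lemma finite_int_box: "finite {k :: int^'n. \<forall>i. a \<le> k$i \<and> k$i \<le> b}"
proof -
  have "{k :: int^'n. \<forall>i. a \<le> k$i \<and> k$i \<le> b} \<subseteq> (\<lambda>f. \<chi> i. f i) ` (PiE UNIV (\<lambda>_. {a..b}))"
  proof
    fix k :: "int^'n" assume "k \<in> {k. \<forall>i. a \<le> k$i \<and> k$i \<le> b}"
    then have "(\<lambda>i. k$i) \<in> PiE UNIV (\<lambda>_. {a..b})" by auto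
    then show "k \<in> (\<lambda>f. \<chi> i. f i) ` (PiE UNIV (\<lambda>_. {a..b}))"
      by (rule rev_image_eqI) simp
  qed
  then show ?thesis
    by (rule finite_subset) (auto intro!: finite_PiE)
qed

lemma finite_Hcell: "finite (Hcell n)"
proof -
  have "Hcell n \<subseteq> {k :: int^4. \<forall>i. -4 * int n \<le> k$i \<and> k$i \<le> 4 * int n}"
  proof
    fix k assume "k \<in> Hcell n"
    then have "k$1 + k$2 + k$3 + k$4 = 0" and "\<forall>a b. k$a - k$b < 4 * int n"
      unfolding Hcell_def Hlat_iff sum_4 by auto
    then show "k \<in> {k :: int^4. \<forall>i. -4 * int n \<le> k$i \<and> k$i \<le> 4 * int n}"
      unfolding forall_4 mem_Collect_eq by (intro conjI; linarith)
  qed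
  then show ?thesis using finite_int_box finite_subset by blast
qed

lemma finite_Lambda: "finite (Lambda n)"
  using finite_subset[OF Lambda_subset_Hcell finite_Hcell] .

definition coord_rank :: "int^4 \<Rightarrow> 4 \<Rightarrow> nat" where
  "coord_rank k i = card {l. k$l > k$i}"

lemma coord_rank_permute_vec:
  assumes "\<sigma> permutes UNIV"
  shows "coord_rank (permute_vec k \<sigma>) i = coord_rank k (\<sigma> i)"
proof -
  have "\<sigma> ` {l. k$(\<sigma> l) > k$(\<sigma> i)} = {l. k$l > k$(\<sigma> i)}"
  proof (intro set_eqI iffI)
    fix x assume "x \<in> {l. k$l > k$(\<sigma> i)}"
    then show "x \<in> \<sigma> ` {l. k$(\<sigma> l) > k$(\<sigma> i)}"
      by (intro image_eqI[of _ _ "inv \<sigma> x"]) (auto simp: permutes_inverses[OF assms])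
  qed auto
  moreover have "inj_on \<sigma> {l. k$(\<sigma> l) > k$(\<sigma> i)}"
    using permutes_inj[OF assms] by (simp add: inj_on_def inj_def)
  ultimately show ?thesis unfolding coord_rank_def using card_image by fastforce
qed

lemma coord_rank_le_3: "coord_rank k i \<le> 3"
proof -
  have "card {l. k$l > k$i} \<le> card (UNIV - {i})"
    by (rule card_mono) auto
  also have "\<dots> = 3" by (simp add: card_Diff_singleton)
  finally show ?thesis unfolding coord_rank_def .
qed

lemma coord_rank_antimono: "k$a \<le> k$b \<Longrightarrow> coord_rank k b \<le> coord_rank k a"
  unfolding coord_rank_def by (rule card_mono) auto

lemma coord_rank_less_imp_greater: "coord_rank k a < coord_rank k b \<Longrightarrow> k$b < k$a"
  using coord_rank_antimono[of k a b] by (meson not_le order.strict_iff_not)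

lemma coord_rank_strict_antimono: "k$a < k$b \<Longrightarrow> coord_rank k b < coord_rank k a"
  unfolding coord_rank_def by (rule psubset_card_mono) auto

lemma inj_coord_rank:
  assumes "\<forall>a b. a \<noteq> b \<longrightarrow> k$a \<noteq> k$b"
  shows "inj (coord_rank k)"
proof (rule injI, rule ccontr)
  fix a b assume "coord_rank k a = coord_rank k b" "a \<noteq> b"
  moreover from \<open>a \<noteq> b\<close> assms have "k$a < k$b \<or> k$b < k$a" by (meson linorder_neqE)
  ultimately show False using coord_rank_strict_antimono[of k] by fastforce
qed

lemma Collect_4:
  "{l :: 4. P l} = (if P 1 then {1} else {}) \<union> (if P 2 then {2} else {})
      \<union> (if P 3 then {3} else {}) \<union> (if P 4 then {4} else {})"
  apply (rule set_eqI)
  subgoal for x using exhaust_4[of x] by auto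
  done

lemma coord_rank_descending:
  assumes "descending k"
  shows "coord_rank k 1 = 0 \<and> coord_rank k 2 = 1 \<and> coord_rank k 3 = 2 \<and> coord_rank k 4 = 3"
proof -
  have "k$4 < k$3" "k$3 < k$2" "k$2 < k$1" using assms unfolding descending_def by auto
  then have "{l. k$l > k$1} = {}" "{l. k$l > k$2} = {1}"
      "{l. k$l > k$3} = {1, 2}" "{l. k$l > k$4} = {1, 2, 3}"
    by (subst Collect_4; force)+
  then show ?thesis unfolding coord_rank_def by simp
qed

lemma descending_permute_vec_unique:
  assumes "\<pi> permutes UNIV" "descending k" "descending (permute_vec k \<pi>)"
  shows "\<pi> = id"
proof -
  have "coord_rank k (\<pi> i) = coord_rank k i" for i
    using coord_rank_permute_vec[OF assms(1), of k i] coord_rank_descending[OF assms(2)]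
      coord_rank_descending[OF assms(3)] exhaust_4[of i] by auto
  moreover have "coord_rank k x = coord_rank k y \<Longrightarrow> x = y" for x y
    using coord_rank_descending[OF assms(2)] exhaust_4[of x] exhaust_4[of y] by auto
  ultimately show ?thesis by (simp add: fun_eq_iff)
qed

text \<open>The ranks of distinct coordinates, shifted into the index type, form a permutation whose
  inverse sorts them.\<close>
lemma ex_descending_permute_vec:
  assumes "\<forall>a b. a \<noteq> b \<longrightarrow> k$a \<noteq> k$b"
  obtains \<sigma> where "\<sigma> permutes UNIV" "descending (permute_vec k \<sigma>)"
proof -
  define \<rho> :: "4 \<Rightarrow> 4" where "\<rho> i = of_nat (coord_rank k i) + 1" for i
  have of_nat_4_eq: "m = m'" if "m \<le> 3" "m' \<le> 3" "(of_nat m + 1 :: 4) = of_nat m' + 1" for m m'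
  proof -
    have "m = 0 \<or> m = 1 \<or> m = 2 \<or> m = 3" "m' = 0 \<or> m' = 1 \<or> m' = 2 \<or> m' = 3"
      using that(1,2) by auto
    then show ?thesis using that(3) by auto
  qed
  have "inj \<rho>"
    using inj_coord_rank[OF assms] coord_rank_le_3 of_nat_4_eq unfolding \<rho>_def inj_def by metis
  then have "bij \<rho>" by (simp add: bij_def finite_UNIV_inj_surj)
  define \<sigma> where "\<sigma> = inv \<rho>"
  have "\<sigma> permutes UNIV" unfolding \<sigma>_def using \<open>bij \<rho>\<close> bij_imp_bij_inv bij_imp_permutes by blast
  have \<rho>\<sigma>: "of_nat (coord_rank k (\<sigma> i)) + 1 = (of_nat m + 1 :: 4) \<Longrightarrow> m \<le> 3 \<Longrightarrow> coord_rank k (\<sigma> i) = m" for i m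
    using of_nat_4_eq[OF coord_rank_le_3] by blast
  have "\<rho> (\<sigma> i) = i" for i
    using \<open>bij \<rho>\<close> unfolding \<sigma>_def by (simp add: bij_is_surj surj_f_inv_f)
  then have "coord_rank k (\<sigma> 1) = 0" "coord_rank k (\<sigma> 2) = 1" "coord_rank k (\<sigma> 3) = 2" "coord_rank k (\<sigma> 4) = 3"
    unfolding \<rho>_def by (auto intro!: \<rho>\<sigma>)
  then have "descending (permute_vec k \<sigma>)"
    unfolding descending_def using coord_rank_less_imp_greater[of k] by simp
  with \<open>\<sigma> permutes UNIV\<close> show ?thesis using that by blast
qed

lemma descending_permute_vec_eq:
  assumes "\<sigma> permutes UNIV" "\<tau> permutes UNIV"
    and "descending (permute_vec k \<sigma>)" "descending (permute_vec k \<tau>)"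
  shows "\<sigma> = \<tau>"
proof -
  have "inv \<sigma> \<circ> \<tau> permutes UNIV"
    using assms(1,2) by (simp add: permutes_compose permutes_inv)
  moreover have "permute_vec (permute_vec k \<sigma>) (inv \<sigma> \<circ> \<tau>) = permute_vec k \<tau>"
    by (simp only: permute_vec_comp o_assoc permutes_inv_o(1)[OF assms(1)] id_comp)
  ultimately have "inv \<sigma> \<circ> \<tau> = id"
    using descending_permute_vec_unique[of _ "permute_vec k \<sigma>"] assms(3,4) by simp
  then have "\<sigma> \<circ> (inv \<sigma> \<circ> \<tau>) = \<sigma>" by simp
  then show ?thesis by (simp only: o_assoc permutes_inv_o(1)[OF assms(1)] id_comp)
qed

lemma card_permutes_into_Lambda:
  assumes "k \<in> Hcell n" "\<forall>a b. a \<noteq> b \<longrightarrow> k$a \<noteq> k$b"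
  shows "card {\<sigma> \<in> perms4. permute_vec k \<sigma> \<in> Lambda n} = 1"
proof -
  have "permute_vec k \<tau> \<in> Lambda n \<longleftrightarrow> descending (permute_vec k \<tau>)" if "\<tau> permutes UNIV" for \<tau>
    using Lambda_iff_descending Hcell_permute_vec[OF assms(1) that] by blast
  moreover obtain \<sigma> where "\<sigma> permutes UNIV" "descending (permute_vec k \<sigma>)"
    using ex_descending_permute_vec[OF assms(2)] by blast
  ultimately have "{\<sigma> \<in> perms4. permute_vec k \<sigma> \<in> Lambda n} = {\<sigma>}"
    using descending_permute_vec_eq by blast
  then show ?thesis by simp
qed

lemma sum_Hcell_permute_vec:
  fixes F :: "int^4 \<Rightarrow> 'a :: comm_monoid_add"
  assumes "\<tau> permutes UNIV"
  shows "(\<Sum>k\<in>Hcell n. F (permute_vec k \<tau>)) = (\<Sum>k\<in>Hcell n. F k)"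
proof (rule sum.reindex_bij_witness[where i="\<lambda>k. permute_vec k (inv \<tau>)" and j="\<lambda>k. permute_vec k \<tau>"])
  show "permute_vec (permute_vec k \<tau>) (inv \<tau>) = k" "permute_vec (permute_vec k (inv \<tau>)) \<tau> = k"
    for k :: "int^4"
    by (simp_all add: permute_vec_inv_cancel[OF assms])
  show "permute_vec k \<tau> \<in> Hcell n" "permute_vec k (inv \<tau>) \<in> Hcell n" if "k \<in> Hcell n" for k
    using Hcell_permute_vec[OF that] assms permutes_inv by blast+
qed simp

lemma sum_Hcell_restricted_permute_vec:
  assumes "\<sigma> permutes UNIV"
    and invariant: "\<And>k. k \<in> Hcell n \<Longrightarrow> G (permute_vec k \<sigma>) = G k"
  shows "(\<Sum>k\<in>Hcell n. if permute_vec k \<sigma> \<in> Lambda n then G k else 0) = sum G (Lambda n)"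
proof -
  have "(\<Sum>k\<in>Hcell n. if permute_vec k \<sigma> \<in> Lambda n then G k else 0)
      = (\<Sum>k\<in>Hcell n. if permute_vec k \<sigma> \<in> Lambda n then G (permute_vec k \<sigma>) else 0)"
    using invariant by (intro sum.cong) auto
  also have "\<dots> = (\<Sum>k\<in>Hcell n. if k \<in> Lambda n then G k else 0)"
    by (rule sum_Hcell_permute_vec[OF assms(1), where F="\<lambda>k. if k \<in> Lambda n then G k else 0"])
  also have "\<dots> = sum G (Lambda n)"
    using Lambda_subset_Hcell by (intro sum.mono_neutral_cong_right finite_Hcell) auto
  finally show ?thesis .
qed

text \<open>Double counting over \<open>perms4 \<times> Hcell n\<close>: a point of the cell with distinct coordinates is a
  permutation of exactly one point of \<open>Lambda n\<close>.\<close>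
lemma sum_Hcell_eq_24_sum_Lambda:
  fixes G :: "int^4 \<Rightarrow> 'a :: comm_ring_1"
  assumes invariant: "\<And>k \<sigma>. k \<in> Hcell n \<Longrightarrow> \<sigma> permutes UNIV \<Longrightarrow> G (permute_vec k \<sigma>) = G k"
    and vanishing: "\<And>k a b. k \<in> Hcell n \<Longrightarrow> a \<noteq> b \<Longrightarrow> k$a = k$b \<Longrightarrow> G k = 0"
  shows "sum G (Hcell n) = 24 * sum G (Lambda n)"
proof -
  have "G k = (\<Sum>\<sigma>\<in>perms4. if permute_vec k \<sigma> \<in> Lambda n then G k else 0)"
    if k: "k \<in> Hcell n" for k
  proof (cases "\<forall>a b. a \<noteq> b \<longrightarrow> k$a \<noteq> k$b")
    case True
    then show ?thesis
      using card_permutes_into_Lambda[OF k True]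
      by (simp add: sum.inter_filter[OF finite_permutations, symmetric])
  next
    case False
    then have "G k = 0" using vanishing[OF k] by blast
    then show ?thesis by (simp add: sum.neutral)
  qed
  then have "sum G (Hcell n) = (\<Sum>\<sigma>\<in>perms4. \<Sum>k\<in>Hcell n. if permute_vec k \<sigma> \<in> Lambda n then G k else 0)"
    by (subst sum.swap) (rule sum.cong[OF refl])
  also have "\<dots> = (\<Sum>\<sigma>\<in>perms4. sum G (Lambda n))"
  proof (rule sum.cong[OF refl])
    fix \<sigma> assume "\<sigma> \<in> perms4"
    then show "(\<Sum>k\<in>Hcell n. if permute_vec k \<sigma> \<in> Lambda n then G k else 0) = sum G (Lambda n)"
      by (intro sum_Hcell_restricted_permute_vec invariant) auto
  qed
  finally show ?thesis by (simp add: card_perms4)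
qed

section \<open>Congruence modulo \<open>4n\<close>\<close>

definition cong_4n :: "nat \<Rightarrow> int^4 \<Rightarrow> int^4 \<Rightarrow> bool" where
  "cong_4n n j j' \<longleftrightarrow> (\<forall>i. 4 * int n dvd j$i - j'$i)"

definition regular :: "nat \<Rightarrow> int^4 \<Rightarrow> bool" where
  "regular n j \<longleftrightarrow> (\<forall>a b. a \<noteq> b \<longrightarrow> \<not> 4 * int n dvd j$a - j$b)"

definition Hresidues :: "nat \<Rightarrow> (int^4) set" where
  "Hresidues n = {j \<in> Hlat. \<forall>i \<in> {1, 2, 3}. 0 \<le> j$i \<and> j$i < 4 * int n}"

lemma cong_4n_refl: "cong_4n n j j"
  unfolding cong_4n_def by simp

lemma cong_4n_sym: "cong_4n n j j' \<Longrightarrow> cong_4n n j' j"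
  unfolding cong_4n_def by (metis dvd_diff_commute)

lemma cong_4n_trans: "cong_4n n j j' \<Longrightarrow> cong_4n n j' j'' \<Longrightarrow> cong_4n n j j''"
  unfolding cong_4n_def
proof (intro allI)
  fix i assume "\<forall>i. 4 * int n dvd j$i - j'$i" "\<forall>i. 4 * int n dvd j'$i - j''$i"
  then have "4 * int n dvd (j$i - j'$i) + (j'$i - j''$i)" by (blast intro: dvd_add)
  then show "4 * int n dvd j$i - j''$i" by simp
qed

lemma Hlat_cong_4n:
  assumes "j \<in> Hlat" "cong_4n n j j'" "(\<Sum>i\<in>UNIV. j'$i) = 0"
  shows "j' \<in> Hlat"
proof -
  have "j'$a mod 4 = j$a mod 4" for a
  proof -
    have "4 dvd j$a - j'$a"
      using assms(2) unfolding cong_4n_def by (metis dvd_mult_left)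
    then show ?thesis by (metis mod_eq_dvd_iff)
  qed
  then show ?thesis using assms(1,3) unfolding Hlat_iff by simp
qed

lemma regular_cong_4n:
  assumes "cong_4n n j j'" "regular n j"
  shows "regular n j'"
  unfolding regular_def
proof (intro allI impI notI)
  fix a b assume "a \<noteq> b" "4 * int n dvd j'$a - j'$b"
  moreover have "4 * int n dvd j$a - j'$a" "4 * int n dvd j$b - j'$b"
    using assms(1) unfolding cong_4n_def by auto
  ultimately have "4 * int n dvd (j'$a - j'$b) + (j$a - j'$a) - (j$b - j'$b)"
    by (blast intro: dvd_add dvd_diff)
  then have "4 * int n dvd j$a - j$b" by (simp add: algebra_simps)
  then show False using assms(2) \<open>a \<noteq> b\<close> unfolding regular_def by auto
qed

lemma Hcell_cong_4n_imp_eq: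
  assumes "n \<ge> 1" "j \<in> Hcell n" "j' \<in> Hcell n" "cong_4n n j j'"
  shows "j = j'"
proof -
  define N where "N = 4 * int n"
  have "N > 0" using assms(1) unfolding N_def by simp
  define v where "v i = (j$i - j'$i) div N" for i
  have jv: "j$i - j'$i = N * v i" for i
    using assms(4) unfolding cong_4n_def v_def N_def by simp
  have v: "v a - v b \<le> 1" for a b
  proof -
    have "j$a - j$b < N" "j'$b - j'$a < N" using assms(2,3) unfolding Hcell_def N_def by auto
    then have "N * (v a - v b) < N * 2" using jv[of a] jv[of b] by (simp add: algebra_simps)
    then have "v a - v b < 2" using \<open>N > 0\<close> by (simp add: mult_less_cancel_left_pos)
    then show ?thesis by simp
  qed
  moreover have "N * (v 1 + v 2 + v 3 + v 4) = 0"
    using assms(2,3) jv[of 1] jv[of 2] jv[of 3] jv[of 4]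
    unfolding Hcell_def Hlat_iff sum_4 by (simp add: algebra_simps)
  then have "v 1 + v 2 + v 3 + v 4 = 0" using \<open>N > 0\<close> by simp
  moreover note v[of 1 2] v[of 1 3] v[of 1 4] v[of 2 1] v[of 2 3] v[of 2 4]
    v[of 3 1] v[of 3 2] v[of 3 4] v[of 4 1] v[of 4 2] v[of 4 3]
  ultimately have "v 1 = 0" "v 2 = 0" "v 3 = 0" "v 4 = 0" by linarith+
  then have "v i = 0" for i using exhaust_4[of i] by auto
  then show ?thesis using jv by (simp add: vec_eq_iff)
qed

lemma sum_squares_shift_decreases:
  fixes u :: "int^'n" and N :: int
  assumes "N > 0" "u$a - u$b > N"
  shows "(\<Sum>i\<in>UNIV. (u$i + (if i = b then N else 0) - (if i = a then N else 0))^2) < (\<Sum>i\<in>UNIV. (u$i)^2)"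
proof -
  have "a \<noteq> b" using assms by auto
  then have "(u$i + (if i = b then N else 0) - (if i = a then N else 0))^2
      = (u$i)^2 + (if i = a then N^2 - 2*N*u$a else 0) + (if i = b then N^2 + 2*N*u$b else 0)" for i
    by (auto simp: power2_eq_square algebra_simps)
  moreover have "N * N < N * (u$a - u$b)" using assms by (simp add: mult_strict_left_mono)
  ultimately show ?thesis
    by (simp add: sum.distrib power2_eq_square algebra_simps)
qed

text \<open>A representative of least Euclidean norm in a regular class lies in the cell: otherwise
  two coordinates differ by more than \<open>4n\<close>, and moving them \<open>4n\<close> closer decreases the norm.\<close>
lemma ex_Hcell_cong_4n:
  assumes "n \<ge> 1" "j \<in> Hlat" "regular n j"
  obtains u where "u \<in> Hcell n" "cong_4n n u j"
proof -
  define N where "N = 4 * int n"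
  have "N > 0" using assms(1) unfolding N_def by simp
  define norm2 where "norm2 u = nat (\<Sum>i\<in>UNIV. (u$i)^2)" for u :: "int^4"
  obtain u where u: "u \<in> Hlat" "cong_4n n u j"
    and min: "\<And>y. y \<in> Hlat \<Longrightarrow> cong_4n n y j \<Longrightarrow> norm2 u \<le> norm2 y"
    using ex_has_least_nat[of "\<lambda>u. u \<in> Hlat \<and> cong_4n n u j" j norm2] assms(2) cong_4n_refl by blast
  have "u$a - u$b < N" for a b
  proof (rule ccontr)
    assume "\<not> u$a - u$b < N"
    moreover have "u$a - u$b \<noteq> N"
    proof
      assume "u$a - u$b = N"
      then have "a \<noteq> b" "4 * int n dvd u$a - u$b" using \<open>N > 0\<close> unfolding N_def by auto
      then show False
        using regular_cong_4n[OF cong_4n_sym[OF u(2)] assms(3)] unfolding regular_def by blast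
    qed
    ultimately have gt: "u$a - u$b > N" by simp
    define u' where "u' = (\<chi> i. u$i + (if i = b then N else 0) - (if i = a then N else 0))"
    have "cong_4n n u u'" unfolding cong_4n_def N_def u'_def by auto
    have "cong_4n n u' j" by (rule cong_4n_trans[OF cong_4n_sym u(2)]) fact
    have "(\<Sum>i\<in>UNIV. u'$i) = 0"
      using u(1) unfolding u'_def Hlat_iff by (simp add: sum.distrib sum_subtractf)
    then have "u' \<in> Hlat" by (rule Hlat_cong_4n[OF u(1) \<open>cong_4n n u u'\<close>])
    have "(\<Sum>i\<in>UNIV. (u'$i)^2) < (\<Sum>i\<in>UNIV. (u$i)^2)"
      unfolding u'_def using sum_squares_shift_decreases[OF \<open>N > 0\<close> gt] by simp
    moreover have "0 \<le> (\<Sum>i\<in>UNIV. (u'$i)^2)" by (simp add: sum_nonneg)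
    ultimately have "norm2 u' < norm2 u"
      unfolding norm2_def by (simp only: nat_less_eq_zless)
    then show False using min[OF \<open>u' \<in> Hlat\<close> \<open>cong_4n n u' j\<close>] by simp
  qed
  then have "u \<in> Hcell n" using u(1) unfolding Hcell_def N_def by auto
  with u(2) show ?thesis using that by blast
qed

lemma Hresidues_cong_4n_imp_eq:
  assumes "d \<in> Hresidues n" "d' \<in> Hresidues n" "cong_4n n d d'"
  shows "d = d'"
proof -
  have "d$i = d'$i" if "i \<in> {1, 2, 3}" for i
  proof -
    have "\<bar>d$i - d'$i\<bar> < 4 * int n" using assms(1,2) that unfolding Hresidues_def by auto
    moreover have "4 * int n dvd d$i - d'$i" using assms(3) unfolding cong_4n_def by auto
    ultimately show ?thesis using dvd_imp_le_int[of "d$i - d'$i" "4 * int n"] by fastforce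
  qed
  moreover have "d$1 + d$2 + d$3 + d$4 = 0" "d'$1 + d'$2 + d'$3 + d'$4 = 0"
    using assms(1,2) unfolding Hresidues_def Hlat_iff sum_4 by auto
  ultimately have "d$i = d'$i" for i using exhaust_4[of i] by auto
  then show ?thesis by (simp add: vec_eq_iff)
qed

definition reduce_mod :: "nat \<Rightarrow> int^4 \<Rightarrow> int^4" where
  "reduce_mod n j = (\<chi> i. if i = 4 then - (j$1 mod (4 * int n) + j$2 mod (4 * int n) + j$3 mod (4 * int n))
                     else j$i mod (4 * int n))"

lemma cong_4n_reduce_mod:
  assumes "j \<in> Hlat"
  shows "cong_4n n (reduce_mod n j) j"
  unfolding cong_4n_def
proof
  fix i :: 4
  define N where "N = 4 * int n"
  have "j$4 = - (j$1 + j$2 + j$3)" using assms unfolding Hlat_iff sum_4 by simp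
  then have "reduce_mod n j $ 4 - j $ 4 = (j$1 - j$1 mod N) + (j$2 - j$2 mod N) + (j$3 - j$3 mod N)"
    unfolding reduce_mod_def N_def by simp
  then have "N dvd reduce_mod n j $ 4 - j $ 4"
    by (simp add: dvd_minus_mod)
  moreover have "N dvd reduce_mod n j $ i - j $ i" if "i \<noteq> 4"
  proof -
    have "N dvd j$i mod N - j$i" using dvd_minus_mod[of N "j$i"] dvd_diff_commute by blast
    then show ?thesis using that unfolding reduce_mod_def N_def by simp
  qed
  ultimately show "4 * int n dvd reduce_mod n j $ i - j $ i" unfolding N_def by blast
qed

lemma reduce_mod_in_Hresidues: "n \<ge> 1 \<Longrightarrow> j \<in> Hlat \<Longrightarrow> reduce_mod n j \<in> Hresidues n"
  unfolding Hresidues_def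
  by (auto intro!: Hlat_cong_4n[OF _ cong_4n_sym[OF cong_4n_reduce_mod]]) (simp_all add: reduce_mod_def sum_4)

lemma finite_Hresidues: "finite (Hresidues n)"
proof -
  have "Hresidues n \<subseteq> {k :: int^4. \<forall>i. -12 * int n \<le> k$i \<and> k$i \<le> 4 * int n}"
  proof
    fix k assume "k \<in> Hresidues n"
    then have "k$1 + k$2 + k$3 + k$4 = 0"
      "0 \<le> k$1" "k$1 < 4 * int n" "0 \<le> k$2" "k$2 < 4 * int n" "0 \<le> k$3" "k$3 < 4 * int n"
      unfolding Hresidues_def Hlat_iff sum_4 by auto
    then show "k \<in> {k :: int^4. \<forall>i. -12 * int n \<le> k$i \<and> k$i \<le> 4 * int n}"
      unfolding forall_4 mem_Collect_eq by (intro conjI; linarith)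
  qed
  then show ?thesis using finite_int_box finite_subset by blast
qed

lemma bij_betw_reduce_mod_regular:
  assumes "n \<ge> 1"
  shows "bij_betw (reduce_mod n) {j \<in> Hcell n. regular n j} {d \<in> Hresidues n. regular n d}"
proof (rule bij_betw_imageI)
  show "inj_on (reduce_mod n) {j \<in> Hcell n. regular n j}"
  proof (rule inj_onI)
    fix x y assume x: "x \<in> {j \<in> Hcell n. regular n j}" and y: "y \<in> {j \<in> Hcell n. regular n j}"
      and eq: "reduce_mod n x = reduce_mod n y"
    have "x \<in> Hlat" "y \<in> Hlat" using x y Hcell_subset_Hlat by auto
    then have "cong_4n n x (reduce_mod n y)" "cong_4n n (reduce_mod n y) y"
      using cong_4n_sym[OF cong_4n_reduce_mod[of x n]] cong_4n_reduce_mod[of y n] eq by auto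
    then have "cong_4n n x y" by (rule cong_4n_trans)
    then show "x = y" using Hcell_cong_4n_imp_eq[OF assms] x y by auto
  qed
  show "reduce_mod n ` {j \<in> Hcell n. regular n j} = {d \<in> Hresidues n. regular n d}"
  proof (intro set_eqI iffI)
    fix d assume "d \<in> reduce_mod n ` {j \<in> Hcell n. regular n j}"
    then obtain j where "j \<in> Hcell n" "regular n j" "d = reduce_mod n j" by blast
    then show "d \<in> {d \<in> Hresidues n. regular n d}"
      using reduce_mod_in_Hresidues[OF assms] regular_cong_4n[OF cong_4n_sym[OF cong_4n_reduce_mod]]
        Hcell_subset_Hlat by blast
  next
    fix d assume d: "d \<in> {d \<in> Hresidues n. regular n d}"
    then have "d \<in> Hlat" unfolding Hresidues_def by auto
    then obtain u where u: "u \<in> Hcell n" "cong_4n n u d" using ex_Hcell_cong_4n[OF assms] d by blast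
    then have "u \<in> Hlat" using Hcell_subset_Hlat by blast
    have "reduce_mod n u = d"
      using reduce_mod_in_Hresidues[OF assms \<open>u \<in> Hlat\<close>] d
        cong_4n_trans[OF cong_4n_reduce_mod[OF \<open>u \<in> Hlat\<close>] u(2)] by (auto intro: Hresidues_cong_4n_imp_eq)
    moreover have "regular n u" using regular_cong_4n[OF cong_4n_sym[OF u(2)]] d by blast
    ultimately show "d \<in> reduce_mod n ` {j \<in> Hcell n. regular n j}" using u(1) by blast
  qed
qed

lemma sum_Hresidues_eq_sum_Hcell:
  fixes G :: "int^4 \<Rightarrow> 'a :: comm_monoid_add"
  assumes "n \<ge> 1"
    and periodic: "\<And>j j'. j \<in> Hlat \<Longrightarrow> j' \<in> Hlat \<Longrightarrow> cong_4n n j j' \<Longrightarrow> G j = G j'"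
    and vanishing: "\<And>j. j \<in> Hlat \<Longrightarrow> \<not> regular n j \<Longrightarrow> G j = 0"
  shows "sum G (Hresidues n) = sum G (Hcell n)"
proof -
  have restrict: "sum G A = sum G {x \<in> A. regular n x}" if "finite A" "A \<subseteq> Hlat" for A
    using that vanishing by (intro sum.mono_neutral_right) auto
  have "sum G (Hresidues n) = sum G {d \<in> Hresidues n. regular n d}"
    by (rule restrict[OF finite_Hresidues]) (auto simp: Hresidues_def)
  also have "\<dots> = (\<Sum>j \<in> {j \<in> Hcell n. regular n j}. G (reduce_mod n j))"
    by (rule sum.reindex_bij_betw[OF bij_betw_reduce_mod_regular[OF assms(1)], symmetric])
  also have "\<dots> = sum G {j \<in> Hcell n. regular n j}"
  proof (rule sum.cong[OF refl])
    fix j assume "j \<in> {j \<in> Hcell n. regular n j}"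
    then have "j \<in> Hlat" using Hcell_subset_Hlat by auto
    then have "reduce_mod n j \<in> Hlat" using reduce_mod_in_Hresidues[OF assms(1)] by (simp add: Hresidues_def)
    then show "G (reduce_mod n j) = G j" by (rule periodic[OF _ \<open>j \<in> Hlat\<close> cong_4n_reduce_mod[OF \<open>j \<in> Hlat\<close>]])
  qed
  also have "\<dots> = sum G (Hcell n)"
    by (rule restrict[OF finite_Hcell Hcell_subset_Hlat, symmetric])
  finally show ?thesis .
qed

section \<open>Character sums over a residue system\<close>

definition unit_root :: "int \<Rightarrow> nat \<Rightarrow> complex" where
  "unit_root c q = exp (2 * of_real pi * \<i> * of_int c / of_nat q)"

lemma unit_root_power_self: "q > 0 \<Longrightarrow> unit_root c q ^ q = 1"
proof -
  assume "q > 0"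
  have "unit_root c q ^ q = exp (of_nat q * (2 * of_real pi * \<i> * of_int c / of_nat q))"
    unfolding unit_root_def by (rule exp_of_nat_mult[symmetric])
  also have "of_nat q * (2 * of_real pi * \<i> * of_int c / of_nat q) = \<i> * (of_int c * (of_real pi * 2))"
    using \<open>q > 0\<close> by (simp add: field_simps)
  finally show ?thesis by simp
qed

lemma unit_root_eq_1_iff:
  assumes "q > 0"
  shows "unit_root c q = 1 \<longleftrightarrow> int q dvd c"
proof
  assume "int q dvd c"
  then obtain t where "c = int q * t" by (auto simp: dvd_def)
  then have "2 * of_real pi * \<i> * of_int c / of_nat q = \<i> * (of_int t * (of_real pi * 2))"
    using assms by (simp add: field_simps)
  then show "unit_root c q = 1" unfolding unit_root_def by simp
next
  assume "unit_root c q = 1"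
  then obtain k :: int where "2 * pi * of_int c / of_nat q = of_int (2 * k) * pi"
    unfolding unit_root_def exp_eq_1 by auto
  then have "real_of_int c = real q * of_int k" using assms by (simp add: field_simps)
  then have "c = int q * k" by (metis of_int_eq_iff of_int_mult of_int_of_nat_eq)
  then show "int q dvd c" by simp
qed

lemma sum_unit_root_powers:
  assumes "q > 0"
  shows "(\<Sum>b<q. unit_root c q ^ b) = (if int q dvd c then of_nat q else 0)"
  using unit_root_eq_1_iff[OF assms, of c]
  by (simp add: sum_gp_strict unit_root_power_self[OF assms])

lemma unit_root_scale: "k > 0 \<Longrightarrow> unit_root (c * int k) (q * k) = unit_root c q"
  unfolding unit_root_def by (simp add: field_simps)

definition residue_point :: "nat \<times> nat \<times> nat \<times> nat \<Rightarrow> int^4" where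
  "residue_point x = (case x of (r, b1, b2, b3) \<Rightarrow>
     (\<chi> i. if i = 1 then int r + 4 * int b1 else if i = 2 then int r + 4 * int b2
           else if i = 3 then int r + 4 * int b3 else - (3 * int r + 4 * (int b1 + int b2 + int b3))))"

lemma residue_point_nth:
  "residue_point (r, b1, b2, b3) $ 1 = int r + 4 * int b1"
  "residue_point (r, b1, b2, b3) $ 2 = int r + 4 * int b2"
  "residue_point (r, b1, b2, b3) $ 3 = int r + 4 * int b3"
  "residue_point (r, b1, b2, b3) $ 4 = - (3 * int r + 4 * (int b1 + int b2 + int b3))"
  unfolding residue_point_def by simp_all

lemma residue_point_in_Hlat: "residue_point (r, b1, b2, b3) \<in> Hlat"
proof -
  have "- (3 * int r + 4 * (int b1 + int b2 + int b3)) = int r + (- int r - int b1 - int b2 - int b3) * 4"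
    by simp
  then have "(- (3 * int r + 4 * (int b1 + int b2 + int b3))) mod 4 = int r mod 4"
    by (simp only: mod_mult_self1)
  then show ?thesis unfolding Hlat_def sum_4 mem_Collect_eq residue_point_nth by simp
qed

lemma int_div_mod_4_unique:
  fixes r r' b b' :: nat
  assumes "int r + 4 * int b = int r' + 4 * int b'" "r < 4" "r' < 4"
  shows "r = r'" "b = b'"
proof -
  have "(int r + 4 * int b) mod 4 = int r" "(int r' + 4 * int b') mod 4 = int r'"
    using assms(2,3) by simp_all
  then show "r = r'" using assms(1) by simp
  with assms(1) show "b = b'" by simp
qed

lemma inj_on_residue_point: "inj_on residue_point ({..<4} \<times> B1 \<times> B2 \<times> B3)"
proof (rule inj_onI)
  fix x y assume "x \<in> {..<4} \<times> B1 \<times> B2 \<times> B3" "y \<in> {..<4} \<times> B1 \<times> B2 \<times> B3"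
    and eq: "residue_point x = residue_point y"
  moreover obtain r b1 b2 b3 r' b1' b2' b3' where xy: "x = (r, b1, b2, b3)" "y = (r', b1', b2', b3')"
    by (cases x, cases y) auto
  ultimately have "r < 4" "r' < 4" by auto
  from eq have "residue_point x $ i = residue_point y $ i" for i by simp
  from this[of 1] this[of 2] this[of 3] show "x = y"
    using int_div_mod_4_unique[OF _ \<open>r < 4\<close> \<open>r' < 4\<close>] unfolding xy residue_point_nth by blast
qed

lemma Hresidues_subset_residue_point_image:
  "Hresidues n \<subseteq> residue_point ` ({..<4} \<times> {..<n} \<times> {..<n} \<times> {..<n})"
proof
  fix j assume "j \<in> Hresidues n"
  then have bounds: "0 \<le> j$i" "j$i < 4 * int n" if "i \<in> {1, 2, 3}" for i
    using that unfolding Hresidues_def by auto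
  from \<open>j \<in> Hresidues n\<close> have "j$1 + j$2 + j$3 + j$4 = 0"
    and mod4: "j$1 mod 4 = j$2 mod 4" "j$2 mod 4 = j$3 mod 4"
    unfolding Hresidues_def Hlat_def sum_4 by auto
  define r where "r = nat (j$1 mod 4)"
  define b where "b i = nat (j$i div 4)" for i
  have "int r + 4 * int (b i) = j$i" if "i \<in> {1, 2, 3}" for i
  proof -
    have "int r = j$i mod 4" using that mod4 unfolding r_def by auto
    moreover have "int (b i) = j$i div 4" using bounds[OF that] unfolding b_def by simp
    ultimately show ?thesis by (simp add: mod_mult_div_eq)
  qed
  then have "int r + 4 * int (b 1) = j$1" "int r + 4 * int (b 2) = j$2" "int r + 4 * int (b 3) = j$3"
    by simp_all
  then have "residue_point (r, b 1, b 2, b 3) $ i = j $ i" for i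
    using exhaust_4[of i] \<open>j$1 + j$2 + j$3 + j$4 = 0\<close> by (auto simp: residue_point_nth)
  moreover have "b i < n" if "i \<in> {1, 2, 3}" for i
    using bounds[OF that] unfolding b_def by (simp add: nat_less_iff)
  then have "(r, b 1, b 2, b 3) \<in> {..<4} \<times> {..<n} \<times> {..<n} \<times> {..<n}"
    unfolding r_def by auto
  ultimately show "j \<in> residue_point ` ({..<4} \<times> {..<n} \<times> {..<n} \<times> {..<n})"
    by (metis imageI vec_eq_iff)
qed

lemma bij_betw_residue_point:
  "bij_betw residue_point ({..<4} \<times> {..<n} \<times> {..<n} \<times> {..<n}) (Hresidues n)"
proof (rule bij_betw_imageI[OF inj_on_residue_point equalityI[OF _ Hresidues_subset_residue_point_image]])
  show "residue_point ` ({..<4} \<times> {..<n} \<times> {..<n} \<times> {..<n}) \<subseteq> Hresidues n"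
    unfolding Hresidues_def by (auto simp: residue_point_nth residue_point_in_Hlat)
qed

lemma phi_node: "phi m (node n j) = exp (of_real (pi / 2) * \<i> * (of_int (\<Sum>i\<in>UNIV. m$i * j$i) / of_nat (4 * n)))"
proof -
  have "(\<Sum>i\<in>UNIV. real_of_int (m$i) * node n j $ i) = real_of_int (\<Sum>i\<in>UNIV. m$i * j$i) / (4 * real n)"
    unfolding node_def by (simp add: sum_divide_distrib)
  then show ?thesis unfolding phi_def by simp
qed

lemma Hlat_eq_offsets:
  assumes "m \<in> Hlat"
  shows "m$i = m$4 + 4 * ((m$i - m$4) div 4)"
proof -
  have "4 dvd m$i - m$4" using assms unfolding Hlat_iff by (simp add: mod_eq_dvd_iff)
  then show ?thesis by simp
qed

lemma phi_node_residue_point: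
  assumes "n > 0" "m$1 + m$2 + m$3 + m$4 = 0"
    and "m$1 = m$4 + 4 * \<mu>1" "m$2 = m$4 + 4 * \<mu>2" "m$3 = m$4 + 4 * \<mu>3"
  shows "phi m (node n (residue_point (r, b1, b2, b3)))
    = unit_root (- m$4) (4 * n) ^ r * (unit_root \<mu>1 n ^ b1 * (unit_root \<mu>2 n ^ b2 * unit_root \<mu>3 n ^ b3))"
proof -
  have m4: "m$4 = - (\<mu>1 + \<mu>2 + \<mu>3)" using assms(2-) by simp
  have S: "(\<Sum>i\<in>UNIV. m$i * residue_point (r, b1, b2, b3) $ i)
      = - 4 * m$4 * int r + 16 * (\<mu>1 * int b1 + \<mu>2 * int b2 + \<mu>3 * int b3)"
    unfolding sum_4 residue_point_nth assms(3-) m4 by (simp add: algebra_simps)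
  have "of_real (pi / 2) * \<i> * (of_int (\<Sum>i\<in>UNIV. m$i * residue_point (r, b1, b2, b3) $ i) / of_nat (4 * n))
      = of_nat r * (2 * of_real pi * \<i> * of_int (- m$4) / of_nat (4 * n))
        + (of_nat b1 * (2 * of_real pi * \<i> * of_int \<mu>1 / of_nat n)
        + (of_nat b2 * (2 * of_real pi * \<i> * of_int \<mu>2 / of_nat n)
        + of_nat b3 * (2 * of_real pi * \<i> * of_int \<mu>3 / of_nat n)))"
    unfolding S using assms(1) by (simp add: field_simps)
  then show ?thesis
    unfolding phi_node unit_root_def by (simp only: exp_add exp_of_nat_mult)
qed

lemma sum_cartesian_product_4:
  fixes f g1 g2 g3 :: "nat \<Rightarrow> 'a :: comm_semiring_0"
  shows "(\<Sum>(r, b1, b2, b3) \<in> A \<times> B \<times> C \<times> D. f r * (g1 b1 * (g2 b2 * g3 b3)))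
    = sum f A * (sum g1 B * (sum g2 C * sum g3 D))"
  by (simp add: sum.cartesian_product[symmetric] sum_distrib_left[symmetric] sum_distrib_right[symmetric])

lemma sum_Hresidues_phi_eq_product:
  assumes "n > 0" "m$1 + m$2 + m$3 + m$4 = 0"
    and "m$1 = m$4 + 4 * \<mu>1" "m$2 = m$4 + 4 * \<mu>2" "m$3 = m$4 + 4 * \<mu>3"
  shows "(\<Sum>j\<in>Hresidues n. phi m (node n j))
    = (\<Sum>r<4. unit_root (- m$4) (4 * n) ^ r) * ((\<Sum>b<n. unit_root \<mu>1 n ^ b) *
        ((\<Sum>b<n. unit_root \<mu>2 n ^ b) * (\<Sum>b<n. unit_root \<mu>3 n ^ b)))"
proof -
  have "(\<Sum>j\<in>Hresidues n. phi m (node n j))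
      = (\<Sum>(r, b1, b2, b3) \<in> {..<4} \<times> {..<n} \<times> {..<n} \<times> {..<n}. phi m (node n (residue_point (r, b1, b2, b3))))"
    by (subst sum.reindex_bij_betw[OF bij_betw_residue_point, symmetric]) (simp add: case_prod_beta')
  then show ?thesis
    unfolding phi_node_residue_point[OF assms] by (simp only: sum_cartesian_product_4)
qed

lemma Hlat_dvd_iff:
  fixes m :: "int^4"
  assumes "\<And>i. m$i = m$4 + 4 * \<mu> i"
  shows "(\<forall>i. 4 * int n dvd m$i) \<longleftrightarrow> (\<forall>i. int n dvd \<mu> i) \<and> 4 * int n dvd m$4"
proof
  assume dvd: "\<forall>i. 4 * int n dvd m$i"
  have "4 * int n dvd 4 * \<mu> i" for i
    using dvd_diff[OF dvd[rule_format, of i] dvd[rule_format, of 4]] assms[of i] by simp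
  then show "(\<forall>i. int n dvd \<mu> i) \<and> 4 * int n dvd m$4" using dvd by simp
next
  assume dvd: "(\<forall>i. int n dvd \<mu> i) \<and> 4 * int n dvd m$4"
  have "4 * int n dvd m$i" for i
    using dvd_add[of "4 * int n" "m$4" "4 * \<mu> i"] dvd assms[of i] by simp
  then show "\<forall>i. 4 * int n dvd m$i" by blast
qed

lemma sum_Hresidues_phi:
  assumes "n \<ge> 1" "m \<in> Hlat"
  shows "(\<Sum>j\<in>Hresidues n. phi m (node n j)) = (if \<forall>i. 4 * int n dvd m$i then of_nat (4 * n^3) else 0)"
proof -
  have "n > 0" using assms(1) by simp
  define \<mu> where "\<mu> i = (m$i - m$4) div 4" for i
  have m: "m$i = m$4 + 4 * \<mu> i" for i unfolding \<mu>_def by (rule Hlat_eq_offsets[OF assms(2)])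
  have m0: "m$1 + m$2 + m$3 + m$4 = 0" using assms(2) unfolding Hlat_iff sum_4 by simp
  note product = sum_Hresidues_phi_eq_product[OF \<open>n > 0\<close> m0 m m m]
  have geometric: "(\<Sum>b<n. unit_root (\<mu> i) n ^ b) = (if int n dvd \<mu> i then of_nat n else 0)" for i
    by (rule sum_unit_root_powers[OF \<open>n > 0\<close>])
  show ?thesis
  proof (cases "\<forall>i. int n dvd \<mu> i")
    case True
    moreover have "m$4 = - (\<mu> 1 + \<mu> 2 + \<mu> 3)" using m0 m[of 1] m[of 2] m[of 3] by simp
    ultimately have "int n dvd m$4" by simp
    then obtain t where t: "m$4 = t * int n" by (auto simp: dvd_def mult.commute)
    then have "unit_root (- m$4) (4 * n) = unit_root (- t) 4"
      using unit_root_scale[OF \<open>n > 0\<close>, of "- t" 4] by (simp add: mult.commute)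
    then have "(\<Sum>r<4. unit_root (- m$4) (4 * n) ^ r) = (if 4 dvd t then 4 else 0)"
      using sum_unit_root_powers[of 4 "- t"] by simp
    moreover have "4 * int n dvd m$4 \<longleftrightarrow> 4 dvd t" unfolding t using \<open>n > 0\<close> by simp
    ultimately show ?thesis
      unfolding product geometric Hlat_dvd_iff[OF m] using True by (simp add: power3_eq_cube)
  next
    case False
    then have nall: "\<not> (\<forall>i. 4 * int n dvd m$i)" unfolding Hlat_dvd_iff[OF m] by blast
    obtain i where "\<not> int n dvd \<mu> i" using False by blast
    moreover have "\<mu> 4 = 0" unfolding \<mu>_def by simp
    ultimately have "i \<in> {1, 2, 3}" using exhaust_4[of i] by auto
    then have "(\<Sum>b<n. unit_root (\<mu> 1) n ^ b) * ((\<Sum>b<n. unit_root (\<mu> 2) n ^ b) *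
        (\<Sum>b<n. unit_root (\<mu> 3) n ^ b)) = 0"
      using \<open>\<not> int n dvd \<mu> i\<close> unfolding geometric by auto
    then show ?thesis unfolding product if_not_P[OF nall] by simp
  qed
qed

section \<open>Discrete orthogonality\<close>

lemma Lambda_permute_vec_cong_4n_imp_eq:
  assumes "n \<ge> 1" "k \<in> Lambda n" "k' \<in> Lambda n" "\<sigma> permutes UNIV" "\<tau> permutes UNIV"
    and "cong_4n n (permute_vec k \<sigma>) (permute_vec k' \<tau>)"
  shows "\<sigma> = \<tau> \<and> k = k'"
proof -
  have "k \<in> Hcell n" "k' \<in> Hcell n" using assms(2,3) Lambda_subset_Hcell by auto
  then have eq: "permute_vec k \<sigma> = permute_vec k' \<tau>"
    using Hcell_cong_4n_imp_eq[OF assms(1) Hcell_permute_vec Hcell_permute_vec assms(6)] assms(4,5) by blast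
  have "permute_vec (permute_vec k \<sigma>) (inv \<sigma>) = k"
    by (rule permute_vec_inv_cancel(1)[OF assms(4)])
  moreover have "permute_vec (permute_vec k \<sigma>) (inv \<tau>) = k'"
    unfolding eq by (rule permute_vec_inv_cancel(1)[OF assms(5)])
  moreover have "descending k" "descending k'"
    using assms(2,3) \<open>k \<in> Hcell n\<close> \<open>k' \<in> Hcell n\<close> Lambda_iff_descending by blast+
  ultimately have "inv \<sigma> = inv \<tau>"
    using descending_permute_vec_eq[OF permutes_inv[OF assms(4)] permutes_inv[OF assms(5)], of "permute_vec k \<sigma>"]
    by simp
  then have "\<sigma> = \<tau>" using assms(4,5) by (metis permutes_inv_inv)
  with eq show ?thesis using permute_vec_inv_cancel(1)[OF assms(4)] by metis
qed

text \<open>Writing \<open>m = m\<^sub>4\<one> + 4\<mu>\<close> and using \<open>\<Sum>\<^sub>i (j\<^sub>i - j'\<^sub>i) = 0\<close>, the pairing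
  \<open>m \<cdot> (j - j')\<close> is a multiple of \<open>16n\<close>.\<close>
lemma phi_node_cong_4n:
  assumes "n \<ge> 1" "m \<in> Hlat" "j \<in> Hlat" "j' \<in> Hlat" "cong_4n n j j'"
  shows "phi m (node n j) = phi m (node n j')"
proof -
  define N where "N = 4 * int n"
  define v where "v i = (j$i - j'$i) div N" for i
  have j: "j$i = j'$i + N * v i" for i
    using assms(5) unfolding cong_4n_def v_def N_def by (metis add.commute diff_add_cancel dvd_mult_div_cancel)
  define \<mu> where "\<mu> i = (m$i - m$4) div 4" for i
  have m: "m$i = m$4 + 4 * \<mu> i" for i unfolding \<mu>_def by (rule Hlat_eq_offsets[OF assms(2)])
  have "N * (v 1 + v 2 + v 3 + v 4) = 0"
    using assms(3,4) j[of 1] j[of 2] j[of 3] j[of 4] unfolding Hlat_iff sum_4 by (simp add: algebra_simps)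
  then have v4: "v 4 = - (v 1 + v 2 + v 3)" using assms(1) unfolding N_def by simp
  define T where "T = \<mu> 1 * v 1 + \<mu> 2 * v 2 + \<mu> 3 * v 3"
  have S: "(\<Sum>i\<in>UNIV. m$i * j$i) = (\<Sum>i\<in>UNIV. m$i * j'$i) + 16 * int n * T"
    unfolding sum_4 T_def j[of 1] j[of 2] j[of 3] j[of 4] m[of 1] m[of 2] m[of 3] v4 N_def
    by (simp add: algebra_simps)
  have "of_real (pi / 2) * \<i> * (of_int (\<Sum>i\<in>UNIV. m$i * j$i) / of_nat (4 * n))
      = of_real (pi / 2) * \<i> * (of_int (\<Sum>i\<in>UNIV. m$i * j'$i) / of_nat (4 * n)) + \<i> * (of_int T * (of_real pi * 2))"
    unfolding S using assms(1) by (simp add: field_simps)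
  then show ?thesis unfolding phi_node by (simp add: exp_add)
qed

lemma TS_node_cong_4n:
  assumes "n \<ge> 1" "k \<in> Hlat" "j \<in> Hlat" "j' \<in> Hlat" "cong_4n n j j'"
  shows "TS k (node n j) = TS k (node n j')"
  unfolding TS_eq_sum_permute_vec
  using phi_node_cong_4n[OF assms(1) Hlat_permute_vec[OF assms(2)] assms(3-)] by simp

text \<open>At a non-regular node a transposition fixes the node modulo \<open>4n\<close> but flips the sign of
  the antisymmetric function.\<close>
lemma TS_node_eq_0_if_not_regular:
  assumes "n \<ge> 1" "k \<in> Hlat" "j \<in> Hlat" "\<not> regular n j"
  shows "TS k (node n j) = 0"
proof -
  obtain a b where "a \<noteq> b" and dvd: "4 * int n dvd j$a - j$b" using assms(4) unfolding regular_def by auto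
  define j' where "j' = permute_vec j (Transposition.transpose a b)"
  have "cong_4n n j j'" unfolding cong_4n_def j'_def
  proof
    fix i
    show "4 * int n dvd j $ i - permute_vec j (Transposition.transpose a b) $ i"
      using dvd by (cases "i = a"; cases "i = b") (auto simp: Transposition.transpose_def dvd_diff_commute)
  qed
  then have "TS k (node n j) = TS k (node n j')"
    using TS_node_cong_4n[OF assms(1-3)] Hlat_permute_vec[OF assms(3) transpose_permutes_UNIV] j'_def by blast
  moreover have "TS k (node n j') = - TS k (node n j)"
    unfolding j'_def node_permute_vec using TS_perm_vec[OF transpose_permutes_UNIV[of a b]] \<open>a \<noteq> b\<close>
    by (simp add: sign_swap_id)
  ultimately show ?thesis by simp
qed

lemma TS_mult_cnj:
  "TS k x * cnj (TS k' x)
    = (\<Sum>\<sigma>\<in>perms4. \<Sum>\<tau>\<in>perms4. of_int (sign \<sigma> * sign \<tau>) * phi (permute_vec k \<sigma> - permute_vec k' \<tau>) x) / 576"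
proof -
  have "TS k x * cnj (TS k' x)
      = (\<Sum>\<sigma>\<in>perms4. of_int (sign \<sigma>) * phi (permute_vec k \<sigma>) x)
        * (\<Sum>\<tau>\<in>perms4. of_int (sign \<tau>) * cnj (phi (permute_vec k' \<tau>) x)) / 576"
    unfolding TS_eq_sum_permute_vec by simp
  also have "\<dots> = (\<Sum>\<sigma>\<in>perms4. \<Sum>\<tau>\<in>perms4.
      of_int (sign \<sigma> * sign \<tau>) * (phi (permute_vec k \<sigma>) x * cnj (phi (permute_vec k' \<tau>) x))) / 576"
    by (simp add: sum_product mult_ac)
  finally show ?thesis by (simp only: phi_mult_cnj)
qed

lemma sum_Hresidues_TS_mult_cnj:
  assumes "n \<ge> 1" "k \<in> Lambda n" "k' \<in> Lambda n"
  shows "(\<Sum>j\<in>Hresidues n. TS k (node n j) * cnj (TS k' (node n j)))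
    = (if k = k' then of_nat (n^3) / 6 else 0)"
proof -
  have "k \<in> Hlat" "k' \<in> Hlat" using assms(2,3) unfolding Lambda_def by auto
  have char: "(\<Sum>j\<in>Hresidues n. phi (permute_vec k \<sigma> - permute_vec k' \<tau>) (node n j))
      = (if \<sigma> = \<tau> \<and> k = k' then of_nat (4 * n^3) else 0)"
    if "\<sigma> \<in> perms4" "\<tau> \<in> perms4" for \<sigma> \<tau>
  proof -
    have "permute_vec k \<sigma> - permute_vec k' \<tau> \<in> Hlat"
      using that by (intro Hlat_diff Hlat_permute_vec \<open>k \<in> Hlat\<close> \<open>k' \<in> Hlat\<close>) auto
    moreover have "(\<forall>i. 4 * int n dvd (permute_vec k \<sigma> - permute_vec k' \<tau>) $ i) \<longleftrightarrow> \<sigma> = \<tau> \<and> k = k'"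
      using Lambda_permute_vec_cong_4n_imp_eq[OF assms, of \<sigma> \<tau>] that unfolding cong_4n_def by auto
    ultimately show ?thesis using sum_Hresidues_phi[OF assms(1)] by simp
  qed
  have "(\<Sum>j\<in>Hresidues n. TS k (node n j) * cnj (TS k' (node n j)))
      = (\<Sum>\<sigma>\<in>perms4. \<Sum>\<tau>\<in>perms4. of_int (sign \<sigma> * sign \<tau>) *
          (\<Sum>j\<in>Hresidues n. phi (permute_vec k \<sigma> - permute_vec k' \<tau>) (node n j))) / 576"
    unfolding TS_mult_cnj by (simp add: sum_divide_distrib sum_distrib_left sum.swap[of _ "Hresidues n"])
  also have "\<dots> = (\<Sum>\<sigma>\<in>perms4. \<Sum>\<tau>\<in>perms4. if \<sigma> = \<tau> \<and> k = k' then of_nat (4 * n^3) else 0) / 576"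
  proof (intro arg_cong[where f="\<lambda>x. x / 576"] sum.cong refl)
    fix \<sigma> \<tau> assume "\<sigma> \<in> perms4" "\<tau> \<in> perms4"
    then show "of_int (sign \<sigma> * sign \<tau>) * (\<Sum>j\<in>Hresidues n. phi (permute_vec k \<sigma> - permute_vec k' \<tau>) (node n j))
        = (if \<sigma> = \<tau> \<and> k = k' then of_nat (4 * n^3) else 0)"
      by (simp add: char of_int_sign_squared)
  qed
  also have "\<dots> = (if k = k' then 24 * of_nat (4 * n^3) else 0) / 576"
    by (simp add: card_perms4 sum.delta[OF finite_permutations])
  also have "\<dots> = (if k = k' then of_nat (n^3) / 6 else 0)"
    by simp
  finally show ?thesis .
qed

theorem TS_discrete_orthogonality:
  assumes "n \<ge> 1" "k \<in> Lambda n" "k' \<in> Lambda n"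
  shows "(\<Sum>j\<in>Lambda n. TS k (node n j) * cnj (TS k' (node n j))) = (if k = k' then of_nat (n^3) / 144 else 0)"
proof -
  define g where "g j = TS k (node n j) * cnj (TS k' (node n j))" for j
  have "k \<in> Hlat" "k' \<in> Hlat" using assms(2,3) unfolding Lambda_def by auto
  have "sum g (Hcell n) = 24 * sum g (Lambda n)"
  proof (rule sum_Hcell_eq_24_sum_Lambda)
    show "g (permute_vec j \<sigma>) = g j" if "\<sigma> permutes UNIV" for j \<sigma>
      unfolding g_def node_permute_vec TS_perm_vec[OF that]
      by (simp add: mult_ac of_int_sign_squared)
    show "g j = 0" if "a \<noteq> b" "j$a = j$b" for j a b
      using TS_eq_0_if_coords_eq[OF that(1), of "node n j" k] that(2) unfolding g_def node_def by simp
  qed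
  moreover have "sum g (Hresidues n) = sum g (Hcell n)"
  proof (rule sum_Hresidues_eq_sum_Hcell[OF assms(1)])
    show "g j = g j'" if "j \<in> Hlat" "j' \<in> Hlat" "cong_4n n j j'" for j j'
      unfolding g_def using TS_node_cong_4n[OF assms(1) _ that] \<open>k \<in> Hlat\<close> \<open>k' \<in> Hlat\<close> by simp
    show "g j = 0" if "j \<in> Hlat" "\<not> regular n j" for j
      unfolding g_def using TS_node_eq_0_if_not_regular[OF assms(1) \<open>k \<in> Hlat\<close> that] by simp
  qed
  moreover have "sum g (Hresidues n) = (if k = k' then of_nat (n^3) / 6 else 0)"
    unfolding g_def by (rule sum_Hresidues_TS_mult_cnj[OF assms])
  ultimately show ?thesis unfolding g_def[symmetric] by (auto simp: field_simps)
qed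

section \<open>The Dirichlet kernel\<close>

lemma exp_i_minus_exp_neg_i: "exp (\<i> * of_real x) - exp (- (\<i> * of_real x)) = 2 * \<i> * of_real (sin x)"
proof -
  have "sin (of_real x :: complex) = (exp (\<i> * of_real x) - exp (- (\<i> * of_real x))) / (2 * \<i>)"
    by (rule sin_exp_eq)
  then show ?thesis by (simp add: sin_of_real field_simps)
qed

text \<open>At an integer \<open>y\<close> every summand, and the limit defining \<open>dir1 m y / m\<close>, equals
  \<open>(-1)\<^bsup>(m - 1) y\<^esup>\<close>.\<close>
lemma dir1_Ints_eq_sum_exp:
  assumes "y \<in> \<int>"
  shows "complex_of_real (dir1 m y) = (\<Sum>a<m. exp (\<i> * of_real (pi * (real m - 1 - 2 * real a) * y)))"
proof -
  obtain z where z: "y = of_int z" using assms by (auto elim: Ints_cases)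
  define w where "w = int m - 1"
  have "exp (\<i> * of_real (pi * (real m - 1 - 2 * real a) * y)) = of_real (if even (w * z) then 1 else - 1)" for a
  proof -
    have arg: "pi * (real m - 1 - 2 * real a) * y = pi * of_int ((w - 2 * int a) * z)"
      unfolding z w_def by simp
    have "exp (\<i> * of_real (pi * (real m - 1 - 2 * real a) * y)) = cis (pi * of_int ((w - 2 * int a) * z))"
      unfolding arg cis_conv_exp by simp
    also have "\<dots> = of_real (cos (pi * of_int ((w - 2 * int a) * z)))"
      using sin_npi_int[of "(w - 2 * int a) * z"]
      by (simp only: complex_eq_iff cis.simps Re_complex_of_real Im_complex_of_real)
    also have "cos (pi * of_int ((w - 2 * int a) * z)) = (if even ((w - 2 * int a) * z) then 1 else - 1)"
      by (rule cos_npi_int)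
    also have "even ((w - 2 * int a) * z) \<longleftrightarrow> even (w * z)"
      by (simp add: left_diff_distrib)
    finally show ?thesis .
  qed
  moreover have "dir1 m y = real m * (if even (w * z) then 1 else - 1)"
  proof -
    have "cos (pi * real m * y) = (if even (int m * z) then 1 else - 1)"
      unfolding z using cos_npi_int[of "int m * z"] by (simp add: mult.assoc)
    moreover have "cos (pi * y) = (if even z then 1 else - 1)" unfolding z by simp
    moreover have "even (w * z) \<longleftrightarrow> (even (int m * z) \<longleftrightarrow> even z)"
      unfolding w_def by (simp add: algebra_simps) blast
    ultimately show ?thesis unfolding dir1_def using assms by auto
  qed
  ultimately show ?thesis by simp
qed

text \<open>For non-integral \<open>y\<close>, multiplying the sum by \<open>2i sin (\<pi>y)\<close> telescopes.\<close>
lemma dir1_not_Ints_eq_sum_exp: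
  assumes "y \<notin> \<int>"
  shows "complex_of_real (dir1 m y) = (\<Sum>a<m. exp (\<i> * of_real (pi * (real m - 1 - 2 * real a) * y)))"
proof -
  have "sin (pi * y) \<noteq> 0"
    using assms by (auto simp: sin_zero_iff_int2)
  define E where "E t = exp (\<i> * of_real (pi * t * y))" for t
  have E_mult: "E t * E u = E (t + u)" for t u unfolding E_def by (simp add: exp_add[symmetric] algebra_simps)
  have E_diff: "E t - E (- t) = 2 * \<i> * of_real (sin (pi * t * y))" for t
    unfolding E_def using exp_i_minus_exp_neg_i[of "pi * t * y"] by simp
  define S where "S = (\<Sum>a<m. E (real m - 1 - 2 * real a))"
  have "(E 1 - E (- 1)) * S = (\<Sum>a<m. E (real m - 2 * real a) - E (real m - 2 * real (Suc a)))"
    unfolding S_def sum_distrib_left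
    by (rule sum.cong[OF refl]) (simp add: left_diff_distrib E_mult algebra_simps)
  also have "\<dots> = E (real m) - E (- real m)"
    by (subst sum_lessThan_telescope'[where f="\<lambda>a. E (real m - 2 * real a)"]) simp
  finally have "2 * \<i> * of_real (sin (pi * y)) * S = 2 * \<i> * of_real (sin (pi * real m * y))"
    using E_diff[of 1] E_diff[of "real m"] by simp
  then have "S = of_real (sin (pi * real m * y)) / of_real (sin (pi * y))"
    using \<open>sin (pi * y) \<noteq> 0\<close> by (simp add: field_simps)
  then show ?thesis unfolding dir1_def using assms S_def E_def by simp
qed

lemma dir1_eq_sum_exp:
  "complex_of_real (dir1 m y) = (\<Sum>a<m. exp (\<i> * of_real (pi * (real m - 1 - 2 * real a) * y)))"
  using dir1_Ints_eq_sum_exp dir1_not_Ints_eq_sum_exp by blast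

definition int_cube :: "int \<Rightarrow> int \<Rightarrow> (int^4) set" where
  "int_cube lo hi = {a. \<forall>i. lo \<le> a$i \<and> a$i < hi}"

lemma finite_int_cube: "finite (int_cube lo hi)"
  by (rule finite_subset[OF _ finite_int_box[of lo hi]]) (auto simp: int_cube_def less_imp_le)

definition wave :: "real^4 \<Rightarrow> int^4 \<Rightarrow> complex" where
  "wave x a = exp (- (2 * of_real pi * \<i> * of_real (\<Sum>i\<in>UNIV. real_of_int (a$i) * x$i)))"

lemma bij_betw_int_cube: "bij_betw (\<lambda>f. \<chi> i. int (f i)) (UNIV \<rightarrow>\<^sub>E {..<m}) (int_cube 0 (int m))"
proof (rule bij_betw_imageI)
  show "inj_on (\<lambda>f. \<chi> i. int (f i)) (UNIV \<rightarrow>\<^sub>E {..<m})"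
    by (rule inj_onI) (simp add: vec_eq_iff fun_eq_iff)
  show "(\<lambda>f. \<chi> i. int (f i)) ` (UNIV \<rightarrow>\<^sub>E {..<m}) = int_cube 0 (int m)"
  proof (intro set_eqI iffI)
    fix a :: "int^4" assume "a \<in> int_cube 0 (int m)"
    then have "(\<lambda>i. nat (a$i)) \<in> UNIV \<rightarrow>\<^sub>E {..<m}" "a = (\<chi> i. int (nat (a$i)))"
      unfolding int_cube_def by (auto simp: vec_eq_iff nat_less_iff)
    then show "a \<in> (\<lambda>f. \<chi> i. int (f i)) ` (UNIV \<rightarrow>\<^sub>E {..<m})"
      by (intro image_eqI[where f="\<lambda>f. \<chi> i. int (f i)" and x="\<lambda>i. nat (a$i)"]) simp_all
  qed (auto simp: int_cube_def)
qed

text \<open>Expanding the product of the four one-dimensional sums; the constant phase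
  \<open>\<pi>(m - 1) \<Sum>x\<^sub>i\<close> vanishes on the hyperplane.\<close>
lemma Theta_eq_sum_wave:
  assumes "x \<in> R4H"
  shows "complex_of_real (Theta m x) = (\<Sum>a\<in>int_cube 0 (int m). wave x a)"
proof -
  define e where "e i a = exp (\<i> * of_real (pi * (real m - 1 - 2 * real a) * x$i))" for i a
  have "complex_of_real (Theta m x) = (\<Prod>i\<in>UNIV. \<Sum>a<m. e i a)"
    unfolding Theta_def of_real_prod e_def dir1_eq_sum_exp ..
  also have "\<dots> = (\<Sum>f\<in>UNIV \<rightarrow>\<^sub>E {..<m}. \<Prod>i\<in>UNIV. e i (f i))"
    by (rule prod_sum_PiE) auto
  also have "\<dots> = (\<Sum>f\<in>UNIV \<rightarrow>\<^sub>E {..<m}. wave x (\<chi> i. int (f i)))"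
  proof (rule sum.cong[OF refl])
    fix f :: "4 \<Rightarrow> nat"
    have "(\<Sum>i\<in>UNIV. pi * (real m - 1 - 2 * real (f i)) * x$i)
        = (\<Sum>i\<in>UNIV. pi * (real m - 1) * x$i - 2 * pi * (real (f i) * x$i))"
      by (rule sum.cong) (simp_all add: algebra_simps)
    also have "\<dots> = pi * (real m - 1) * (\<Sum>i\<in>UNIV. x$i) - 2 * pi * (\<Sum>i\<in>UNIV. real (f i) * x$i)"
      by (simp add: sum_subtractf sum_distrib_left)
    also have "(\<Sum>i\<in>UNIV. x$i) = 0" using assms unfolding R4H_def by simp
    finally have phase: "(\<Sum>i\<in>UNIV. pi * (real m - 1 - 2 * real (f i)) * x$i)
        = - (2 * pi * (\<Sum>i\<in>UNIV. real (f i) * x$i))" by simp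
    have "(\<Prod>i\<in>UNIV. e i (f i)) = exp (\<Sum>i\<in>UNIV. \<i> * of_real (pi * (real m - 1 - 2 * real (f i)) * x$i))"
      unfolding e_def by (simp add: exp_sum)
    also have "(\<Sum>i\<in>UNIV. \<i> * of_real (pi * (real m - 1 - 2 * real (f i)) * x$i))
        = \<i> * of_real (\<Sum>i\<in>UNIV. pi * (real m - 1 - 2 * real (f i)) * x$i)"
      by (simp add: sum_distrib_left)
    finally show "(\<Prod>i\<in>UNIV. e i (f i)) = wave x (\<chi> i. int (f i))"
      unfolding phase wave_def by (simp add: mult_ac)
  qed
  also have "\<dots> = (\<Sum>a\<in>int_cube 0 (int m). wave x a)"
    by (rule sum.reindex_bij_betw[OF bij_betw_int_cube])
  finally show ?thesis .
qed

lemma wave_add_1: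
  assumes "x \<in> R4H"
  shows "wave x (a + 1) = wave x a"
proof -
  have "x$1 + x$2 + x$3 + x$4 = 0" using assms unfolding R4H_def sum_4 by simp
  then have "(\<Sum>i\<in>UNIV. real_of_int ((a + 1)$i) * x$i) = (\<Sum>i\<in>UNIV. real_of_int (a$i) * x$i)"
    unfolding sum_4 one_vec_def by (simp add: algebra_simps)
  then show ?thesis unfolding wave_def by simp
qed

definition cube_face :: "nat \<Rightarrow> (int^4) set" where
  "cube_face n = {a \<in> int_cube 0 (int n). \<exists>i. a$i = 0}"

lemma int_cube_eq_Un_cube_face: "int_cube 0 (int n) = int_cube 1 (int n) \<union> cube_face n"
proof (intro set_eqI iffI)
  fix a assume a: "a \<in> int_cube 0 (int n)"
  show "a \<in> int_cube 1 (int n) \<union> cube_face n"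
  proof (cases "\<exists>i. a$i = 0")
    case False
    have "1 \<le> a$i \<and> a$i < int n" for i
    proof -
      have "0 \<le> a$i" "a$i < int n" "a$i \<noteq> 0" using a False unfolding int_cube_def by auto
      then show ?thesis by presburger
    qed
    then show ?thesis unfolding int_cube_def by simp
  qed (use a in \<open>simp add: cube_face_def\<close>)
next
  fix a assume "a \<in> int_cube 1 (int n) \<union> cube_face n"
  then show "a \<in> int_cube 0 (int n)"
    unfolding int_cube_def cube_face_def by (fastforce intro: order_trans[OF zero_le_one])
qed

lemma int_cube_1_Int_cube_face: "int_cube 1 (int n) \<inter> cube_face n = {}"
proof (rule equals0I)
  fix a assume "a \<in> int_cube 1 (int n) \<inter> cube_face n"
  then obtain i where "a$i = 0" "1 \<le> a$i" unfolding int_cube_def cube_face_def by blast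
  then show False by simp
qed

lemma image_add_1_int_cube: "(\<lambda>a. a + 1) ` int_cube lo hi = int_cube (lo + 1) (hi + 1)"
proof (intro set_eqI iffI)
  fix a assume "a \<in> int_cube (lo + 1) (hi + 1)"
  then have a: "lo + 1 \<le> a$i \<and> a$i < hi + 1" for i unfolding int_cube_def by blast
  have "lo \<le> (a - 1)$i \<and> (a - 1)$i < hi" for i using a[of i] by (simp add: one_vec_def)
  then have "a - 1 \<in> int_cube lo hi" unfolding int_cube_def by blast
  then show "a \<in> (\<lambda>a. a + 1) ` int_cube lo hi" by (rule rev_image_eqI) simp
next
  fix a assume "a \<in> (\<lambda>a. a + 1) ` int_cube lo hi"
  then obtain b where a: "a = b + 1" and b: "lo \<le> b$i \<and> b$i < hi" for i
    unfolding int_cube_def by blast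
  have ab: "a$i = b$i + 1" for i unfolding a by (simp add: one_vec_def)
  have "lo + 1 \<le> a$i \<and> a$i < hi + 1" for i using ab[of i] b[of i] by linarith
  then show "a \<in> int_cube (lo + 1) (hi + 1)" unfolding int_cube_def by blast
qed

lemma Theta_diff_eq_sum_wave:
  assumes "n \<ge> 1" "x \<in> R4H"
  shows "complex_of_real (Theta n x - Theta (n - 1) x) = (\<Sum>a\<in>cube_face n. wave x a)"
proof -
  have shift: "int_cube 1 (int n) = (\<lambda>a. a + 1) ` int_cube 0 (int (n - 1))"
    using assms(1) by (simp add: image_add_1_int_cube of_nat_diff)
  have "finite (int_cube 1 (int n))" "finite (cube_face n)"
    unfolding cube_face_def using finite_int_cube by simp_all
  then have "(\<Sum>a\<in>int_cube 0 (int n). wave x a)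
      = (\<Sum>a\<in>int_cube 1 (int n). wave x a) + (\<Sum>a\<in>cube_face n. wave x a)"
    unfolding int_cube_eq_Un_cube_face by (rule sum.union_disjoint[OF _ _ int_cube_1_Int_cube_face])
  also have "(\<Sum>a\<in>int_cube 1 (int n). wave x a) = (\<Sum>a\<in>int_cube 0 (int (n - 1)). wave x (a + 1))"
    unfolding shift by (rule sum.reindex[unfolded comp_def]) (simp add: inj_on_def)
  also have "\<dots> = (\<Sum>a\<in>int_cube 0 (int (n - 1)). wave x a)"
    by (simp add: wave_add_1[OF assms(2)])
  finally show ?thesis using Theta_eq_sum_wave[OF assms(2)] by simp
qed

definition face_to_cell :: "int^4 \<Rightarrow> int^4" where
  "face_to_cell a = (\<chi> i. (\<Sum>l\<in>UNIV. a$l) - 4 * a$i)"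

lemma face_to_cell_nth: "face_to_cell a $ i = (\<Sum>l\<in>UNIV. a$l) - 4 * a$i"
  unfolding face_to_cell_def by simp

lemma phi_face_to_cell:
  assumes "x \<in> R4H"
  shows "phi (face_to_cell a) x = wave x a"
proof -
  define S where "S = (\<Sum>l\<in>UNIV. a$l)"
  have "(\<Sum>i\<in>UNIV. real_of_int (face_to_cell a $ i) * x$i)
      = (\<Sum>i\<in>UNIV. real_of_int S * x$i - 4 * (real_of_int (a$i) * x$i))"
    by (rule sum.cong) (simp_all add: face_to_cell_nth S_def algebra_simps)
  also have "\<dots> = real_of_int S * (\<Sum>i\<in>UNIV. x$i) - 4 * (\<Sum>i\<in>UNIV. real_of_int (a$i) * x$i)"
    by (simp add: sum_subtractf sum_distrib_left)
  also have "(\<Sum>i\<in>UNIV. x$i) = 0" using assms unfolding R4H_def by simp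
  finally show ?thesis unfolding phi_def wave_def by (simp add: field_simps)
qed

lemma inj_on_face_to_cell: "inj_on face_to_cell (cube_face n)"
proof (rule inj_onI)
  fix a b assume a: "a \<in> cube_face n" and b: "b \<in> cube_face n" and eq: "face_to_cell a = face_to_cell b"
  define c where "c = (\<Sum>l\<in>UNIV. a$l) - (\<Sum>l\<in>UNIV. b$l)"
  have c: "4 * (a$i - b$i) = c" for i
    using arg_cong[OF eq, of "\<lambda>v. v$i"] unfolding face_to_cell_nth c_def by simp
  obtain i0 i1 where "a$i0 = 0" "b$i1 = 0" using a b unfolding cube_face_def by auto
  moreover have "0 \<le> b$i0" "0 \<le> a$i1" using a b unfolding cube_face_def int_cube_def by auto
  ultimately have "c = 0" using c[of i0] c[of i1] by simp
  then show "a = b" using c by (simp add: vec_eq_iff)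
qed

lemma face_to_cell_in_Hcell: "a \<in> cube_face n \<Longrightarrow> face_to_cell a \<in> Hcell n"
proof -
  assume a: "a \<in> cube_face n"
  have "(S - 4 * t) mod 4 = S mod 4" for S t :: int
    using mod_mult_self1[of S "- t" 4] by (simp add: mult.commute)
  then have "face_to_cell a \<in> Hlat"
    unfolding Hlat_iff face_to_cell_nth sum_4 by simp
  moreover have "face_to_cell a $ p - face_to_cell a $ q < 4 * int n" for p q
  proof -
    have "0 \<le> a$i \<and> a$i < int n" for i using a unfolding cube_face_def int_cube_def by blast
    from this[of p] this[of q] show ?thesis unfolding face_to_cell_nth by simp
  qed
  ultimately show ?thesis unfolding Hcell_def by simp
qed

text \<open>Preimage: shift the cell point so that its largest coordinate becomes \<open>0\<close> and divide by \<open>-4\<close>.\<close>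
lemma Hcell_subset_face_to_cell_image: "Hcell n \<subseteq> face_to_cell ` cube_face n"
proof
  fix k assume k: "k \<in> Hcell n"
  then have "k \<in> Hlat" and diff: "\<And>p q. k$p - k$q < 4 * int n" unfolding Hcell_def by auto
  define M where "M = Max (range (\<lambda>i. k$i))"
  have M: "k$i \<le> M" for i unfolding M_def by (rule Max_ge) auto
  obtain i0 where "k$i0 = M"
    using Max_in[of "range (\<lambda>i. k$i)"] unfolding M_def[symmetric] by auto
  define a where "a = (\<chi> i. (M - k$i) div 4)"
  have a4: "4 * a$i = M - k$i" for i
  proof -
    have "4 dvd M - k$i" using \<open>k \<in> Hlat\<close> \<open>k$i0 = M\<close> unfolding Hlat_iff by (metis mod_eq_dvd_iff)
    then show ?thesis unfolding a_def by simp
  qed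
  have "0 \<le> a$i \<and> a$i < int n" for i using a4[of i] M[of i] diff[of i0 i] \<open>k$i0 = M\<close> by simp
  moreover have "a$i0 = 0" using a4[of i0] \<open>k$i0 = M\<close> by simp
  ultimately have "a \<in> cube_face n" unfolding cube_face_def int_cube_def by auto
  moreover have "face_to_cell a = k"
  proof -
    have "4 * (\<Sum>l\<in>UNIV. a$l) = (\<Sum>l\<in>UNIV. M - k$l)" unfolding sum_distrib_left a4 ..
    also have "\<dots> = 4 * M" using \<open>k \<in> Hlat\<close> unfolding Hlat_iff sum_4 by simp
    finally show ?thesis using a4 by (simp add: vec_eq_iff face_to_cell_nth)
  qed
  ultimately show "k \<in> face_to_cell ` cube_face n" by blast
qed

lemma bij_betw_face_to_cell: "bij_betw face_to_cell (cube_face n) (Hcell n)"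
  unfolding bij_betw_def
  using inj_on_face_to_cell face_to_cell_in_Hcell Hcell_subset_face_to_cell_image by blast

theorem sum_Hcell_phi_eq_Theta_diff:
  assumes "n \<ge> 1" "x \<in> R4H"
  shows "(\<Sum>k\<in>Hcell n. phi k x) = complex_of_real (Theta n x - Theta (n - 1) x)"
proof -
  have "(\<Sum>k\<in>Hcell n. phi k x) = (\<Sum>a\<in>cube_face n. phi (face_to_cell a) x)"
    by (rule sum.reindex_bij_betw[OF bij_betw_face_to_cell, symmetric])
  also have "\<dots> = (\<Sum>a\<in>cube_face n. wave x a)" using phi_face_to_cell[OF assms(2)] by simp
  finally show ?thesis using Theta_diff_eq_sum_wave[OF assms] by simp
qed

section \<open>The reproducing kernel\<close>

lemma Pminus_sum: "Pminus (\<lambda>x. \<Sum>k\<in>A. f k x) t = (\<Sum>k\<in>A. Pminus (f k) t)"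
  unfolding Pminus_def by (simp add: sum_distrib_left sum_divide_distrib sum.swap[of _ A])

lemma Pminus_mult_right: "Pminus (\<lambda>x. f x * c) t = Pminus f t * c"
  unfolding Pminus_def by (simp add: sum_distrib_right sum_distrib_left mult_ac)

lemma Pminus_of_real: "Pminus (\<lambda>x. complex_of_real (G x)) t = complex_of_real (Pminus G t)"
  unfolding Pminus_def by simp

lemma Pminus_cong:
  "(\<And>\<sigma>. \<sigma> permutes UNIV \<Longrightarrow> f (perm_vec t \<sigma>) = g (perm_vec t \<sigma>)) \<Longrightarrow> Pminus f t = Pminus g t"
  unfolding Pminus_def by (auto intro!: sum.cong arg_cong[where f="\<lambda>x. x / 24"])

lemma TS_mult_cnj_phi: "TS k t * cnj (phi k s) = - Pminus (\<lambda>x. phi k (x - s)) t"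
  unfolding TS_def by (simp add: Pminus_mult_right[symmetric] phi_mult_cnj_shift)

lemma TS_mult_cnj_TS:
  "TS k t * cnj (TS k s) = - (\<Sum>\<tau>\<in>perms4. TS (permute_vec k \<tau>) t * cnj (phi (permute_vec k \<tau>) s)) / 24"
proof -
  have "TS k t * cnj (TS k s) = - (\<Sum>\<tau>\<in>perms4. of_int (sign \<tau>) * TS k t * cnj (phi (permute_vec k \<tau>) s)) / 24"
    unfolding TS_eq_sum_permute_vec[of k s] by (simp add: sum_distrib_left mult_ac)
  then show ?thesis by (simp add: TS_permute_vec)
qed

text \<open>The summand is invariant under permutations of \<open>k\<close>, so the sum is a 24th of the sum over
  the cell, where one of the two antisymmetrisations is absorbed by reindexing.\<close>
theorem sum_Lambda_TS_mult_cnj: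
  "(\<Sum>k\<in>Lambda n. TS k t * cnj (TS k s)) = Pminus (\<lambda>x. \<Sum>k\<in>Hcell n. phi k (x - s)) t / 24"
proof -
  define h where "h k = TS k t * cnj (TS k s)" for k
  have "sum h (Hcell n) = 24 * sum h (Lambda n)"
  proof (rule sum_Hcell_eq_24_sum_Lambda)
    show "h (permute_vec k \<sigma>) = h k" if "\<sigma> permutes UNIV" for k \<sigma>
      unfolding h_def TS_permute_vec[OF that] by (simp add: mult_ac of_int_sign_squared)
    show "h k = 0" if "a \<noteq> b" "k$a = k$b" for k a b
      unfolding h_def using TS_eq_0_if_freqs_eq[OF that] by simp
  qed
  moreover have "sum h (Hcell n) = - (\<Sum>k\<in>Hcell n. TS k t * cnj (phi k s))"
  proof -
    have "sum h (Hcell n) = - (\<Sum>\<tau>\<in>perms4. \<Sum>k\<in>Hcell n. TS (permute_vec k \<tau>) t * cnj (phi (permute_vec k \<tau>) s)) / 24"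
      unfolding h_def TS_mult_cnj_TS by (simp add: sum_divide_distrib sum_negf sum.swap[of _ "Hcell n"])
    also have "\<dots> = - (\<Sum>\<tau>\<in>perms4. \<Sum>k\<in>Hcell n. TS k t * cnj (phi k s)) / 24"
      by (simp add: sum_Hcell_permute_vec[where F="\<lambda>k. TS k t * cnj (phi k s)"])
    finally show ?thesis by (simp add: card_perms4)
  qed
  moreover have "- (\<Sum>k\<in>Hcell n. TS k t * cnj (phi k s)) = Pminus (\<lambda>x. \<Sum>k\<in>Hcell n. phi k (x - s)) t"
    by (simp add: TS_mult_cnj_phi Pminus_sum sum_negf)
  ultimately show ?thesis unfolding h_def by simp
qed

lemma ell_eq_Pminus_Theta_diff:
  assumes "n \<ge> 1" "j \<in> Lambda n" "t \<in> R4H"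
  shows "ell n j t = complex_of_real (6 / real n ^ 3 *
           Pminus (\<lambda>s. Theta n (s - node n j) - Theta (n - 1) (s - node n j)) t)"
proof -
  have "j \<in> Hlat" using assms(2) unfolding Lambda_def by auto
  have "Pminus (\<lambda>x. \<Sum>k\<in>Hcell n. phi k (x - node n j)) t
      = Pminus (\<lambda>x. complex_of_real (Theta n (x - node n j) - Theta (n - 1) (x - node n j))) t"
  proof (rule Pminus_cong)
    fix \<sigma> :: "4 \<Rightarrow> 4" assume "\<sigma> permutes UNIV"
    then have "perm_vec t \<sigma> - node n j \<in> R4H"
      using R4H_diff R4H_perm_vec[OF assms(3)] node_in_R4H[OF \<open>j \<in> Hlat\<close>] by blast
    then show "(\<Sum>k\<in>Hcell n. phi k (perm_vec t \<sigma> - node n j))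
        = complex_of_real (Theta n (perm_vec t \<sigma> - node n j) - Theta (n - 1) (perm_vec t \<sigma> - node n j))"
      by (rule sum_Hcell_phi_eq_Theta_diff[OF assms(1)])
  qed
  then show ?thesis
    unfolding ell_def sum_Lambda_TS_mult_cnj Pminus_of_real by simp
qed

section \<open>Interpolation by a discrete orthogonal system\<close>

locale discrete_orthogonal_system =
  fixes I :: "'i set" and b :: "'i \<Rightarrow> 'x \<Rightarrow> complex" and x :: "'i \<Rightarrow> 'x" and c :: complex
  assumes finite_I: "finite I" and c_nonzero: "c \<noteq> 0"
    and orthogonal: "k \<in> I \<Longrightarrow> k' \<in> I \<Longrightarrow> (\<Sum>j\<in>I. b k (x j) * cnj (b k' (x j))) = (if k = k' then c else 0)"
    and symmetric: "k \<in> I \<Longrightarrow> j \<in> I \<Longrightarrow> b k (x j) = b j (x k)"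
begin

definition lagrange :: "'i \<Rightarrow> 'x \<Rightarrow> complex" where
  "lagrange j y = inverse c * (\<Sum>k\<in>I. b k y * cnj (b k (x j)))"

definition interpolant :: "('x \<Rightarrow> complex) \<Rightarrow> 'x \<Rightarrow> complex" where
  "interpolant f y = (\<Sum>j\<in>I. f (x j) * lagrange j y)"

lemma lagrange_node: "j \<in> I \<Longrightarrow> j' \<in> I \<Longrightarrow> lagrange j (x j') = (if j = j' then 1 else 0)"
  unfolding lagrange_def using orthogonal[of j' j] c_nonzero by (simp add: symmetric)

lemma interpolant_node: "j \<in> I \<Longrightarrow> interpolant f (x j) = f (x j)"
  unfolding interpolant_def by (simp add: lagrange_node finite_I if_distrib cong: if_cong)

lemma interpolant_eq_sum:
  "interpolant f = (\<lambda>y. \<Sum>k\<in>I. (inverse c * (\<Sum>j\<in>I. f (x j) * cnj (b k (x j)))) * b k y)"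
proof
  fix y
  have "interpolant f y = (\<Sum>j\<in>I. \<Sum>k\<in>I. inverse c * (f (x j) * cnj (b k (x j))) * b k y)"
    unfolding interpolant_def lagrange_def by (simp add: sum_distrib_left mult_ac)
  also have "\<dots> = (\<Sum>k\<in>I. \<Sum>j\<in>I. inverse c * (f (x j) * cnj (b k (x j))) * b k y)"
    by (rule sum.swap)
  finally show "interpolant f y = (\<Sum>k\<in>I. (inverse c * (\<Sum>j\<in>I. f (x j) * cnj (b k (x j)))) * b k y)"
    by (simp add: sum_distrib_left sum_distrib_right)
qed

lemma sum_eq_interpolant:
  assumes "g = (\<lambda>y. \<Sum>k\<in>I. a k * b k y)" "\<forall>j\<in>I. g (x j) = f (x j)"
  shows "g = interpolant f"
proof -
  have "inverse c * (\<Sum>j\<in>I. f (x j) * cnj (b k (x j))) = a k" if "k \<in> I" for k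
  proof -
    have "(\<Sum>j\<in>I. f (x j) * cnj (b k (x j))) = (\<Sum>j\<in>I. \<Sum>k'\<in>I. a k' * (b k' (x j) * cnj (b k (x j))))"
    proof (rule sum.cong[OF refl])
      fix j assume "j \<in> I"
      then have "f (x j) = (\<Sum>k'\<in>I. a k' * b k' (x j))" using assms by simp
      then show "f (x j) * cnj (b k (x j)) = (\<Sum>k'\<in>I. a k' * (b k' (x j) * cnj (b k (x j))))"
        by (simp add: sum_distrib_right mult.assoc)
    qed
    also have "\<dots> = (\<Sum>k'\<in>I. a k' * (\<Sum>j\<in>I. b k' (x j) * cnj (b k (x j))))"
      by (subst sum.swap) (simp add: sum_distrib_left)
    also have "\<dots> = a k * c"
      using that by (simp add: orthogonal finite_I if_distrib cong: if_cong)
    finally show ?thesis using c_nonzero by simp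
  qed
  then show ?thesis unfolding interpolant_eq_sum assms(1) by (auto intro!: sum.cong)
qed

lemma interpolant_in_span: "interpolant f \<in> {g. \<exists>a. g = (\<lambda>y. \<Sum>k\<in>I. a k * b k y)}"
  unfolding interpolant_eq_sum by (rule CollectI, rule exI, rule refl)

lemma interpolant_unique:
  "g \<in> {g. \<exists>a. g = (\<lambda>y. \<Sum>k\<in>I. a k * b k y)} \<Longrightarrow> \<forall>j\<in>I. g (x j) = f (x j) \<Longrightarrow> g = interpolant f"
  using sum_eq_interpolant by blast
end

lemma TS_discrete_orthogonal_system:
  assumes "n \<ge> 1"
  shows "discrete_orthogonal_system (Lambda n) TS (node n) (of_nat (n ^ 3) / 144)"
proof
  show "(\<Sum>j\<in>Lambda n. TS k (node n j) * cnj (TS k' (node n j)))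
      = (if k = k' then of_nat (n ^ 3) / 144 else 0)" if "k \<in> Lambda n" "k' \<in> Lambda n" for k k'
    by (rule TS_discrete_orthogonality[OF assms that])
qed (use assms in \<open>simp_all add: finite_Lambda TS_node_commute\<close>)

theorem theorem4p6:
  fixes n :: nat and f :: "real^4 \<Rightarrow> complex"
  assumes "n \<ge> 1" and "continuous_on triangleH f"
  shows "Lint n f \<in> TSspace n
    \<and> (\<forall>j\<in>Lambda n. Lint n f (node n j) = f (node n j))
    \<and> (\<forall>g\<in>TSspace n. (\<forall>j\<in>Lambda n. g (node n j) = f (node n j)) \<longrightarrow> g = Lint n f)
    \<and> (\<forall>j\<in>Lambda n. \<forall>t\<in>R4H. ell n j t \<in> \<real> \<and>
         ell n j t = complex_of_real (6 / real n ^ 3 *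
           Pminus (\<lambda>s. Theta n (s - node n j) - Theta (n - 1) (s - node n j)) t))"
proof -
  interpret discrete_orthogonal_system "Lambda n" TS "node n" "of_nat (n ^ 3) / 144"
    by (rule TS_discrete_orthogonal_system[OF assms(1)])
  have "complex_of_real (144 / real n ^ 3) = inverse (of_nat (n ^ 3) / 144)"
    by simp
  then have "ell n = lagrange"
    unfolding ell_def lagrange_def by (intro ext) (simp only:)
  then have Lint: "Lint n f = interpolant f"
    unfolding Lint_def interpolant_def by simp
  have "\<forall>j\<in>Lambda n. \<forall>t\<in>R4H. ell n j t \<in> \<real> \<and>
      ell n j t = complex_of_real (6 / real n ^ 3 *
        Pminus (\<lambda>s. Theta n (s - node n j) - Theta (n - 1) (s - node n j)) t)"
    using ell_eq_Pminus_Theta_diff[OF assms(1)] by simp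
  then show ?thesis
    unfolding Lint TSspace_def using interpolant_in_span interpolant_node interpolant_unique by blast
qed

end
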